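(* Let $R$ be a commutative ring with $\mathbb{Q}\subseteq R$, let $\mathcal{A}$ be a commutative unital $R$-algebra, and let $\mathcal{E}$ be a finitely generated projective $\mathcal{A}$-module with a symmetric, strongly nondegenerate, full $\mathcal{A}$-bilinear form $\langle\cdot,\cdot\rangle$. Equip $\mathcal{C}^\bullet(\mathcal{E})=\bigoplus_{r\ge 0}\mathcal{C}^r(\mathcal{E})$ with the bracket $[\cdot,\cdot]$ and the product $\wedge$ described in the context. Then $(\mathcal{C}^\bullet(\mathcal{E}),[\cdot,\cdot],\wedge)$ is a graded Poisson algebra of degree $-2$. That is: (i) $\wedge$ is associative, graded commutative and of degree $0$; (ii) $[\cdot,\cdot]$ maps $\mathcal{C}^r\times\mathcal{C}^s$ to $\mathcal{C}^{r+s-2}$ and is graded skew-symmetric; (iii) $[\cdot,\cdot]$ satisfies the graded Jacobi identity $[\mathsf{C}_1,[\mathsf{C}_2,\mathsf{C}_3]]=[[\mathsf{C}_1,\mathsf{C}_2],\mathsf{C}_3]+(-1)^{rs}[\mathsf{C}_2,[\mathsf{C}_1,\mathsf{C}_3]]$; (iv) the Leibniz rule $[\mathsf{C}_1,\mathsf{C}_2\wedge\mathsf{C}_3]=[\mathsf{C}_1,\mathsf{C}_2]\wedge\mathsf{C}_3+(-1)^{rs}\mathsf{C}_2\wedge[\mathsf{C}_1,\mathsf{C}_3]$ holds. In (iii) and (iv), $\mathsf{C}_1\in\mathcal{C}^r(\mathcal{E})$, $\mathsf{C}_2\in\mathcal{C}^s(\mathcal{E})$ and $\mathsf{C}_3\in\mathcal{C}^t(\mathcal{E})$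 are arbitrary.
   Context: The form $\langle\cdot,\cdot\rangle:\mathcal{E}\times\mathcal{E}\to\mathcal{A}$ is strongly nondegenerate if the induced map $\mathcal{E}\to\operatorname{Hom}_{\mathcal{A}}(\mathcal{E},\mathcal{A})$ is an isomorphism. It is full if every $a\in\mathcal{A}$ is a finite sum $\sum_i\langle x_i,y_i\rangle$ with $x_i,y_i\in\mathcal{E}$. $\operatorname{Der}(\mathcal{A})$ denotes the $R$-linear derivations of $\mathcal{A}$. Set $\mathcal{C}^0(\mathcal{E})=\mathcal{A}$ and $\mathcal{C}^1(\mathcal{E})=\mathcal{E}$. For $r\ge2$, $\mathcal{C}^r(\mathcal{E})$ is the set of $\mathsf{C}\in\operatorname{Hom}_R(\mathcal{E}^{\otimes_R (r-1)},\mathcal{E})$ for which there is an $R$-multilinear map $\sigma_{\mathsf{C}}:\mathcal{E}^{\otimes_R(r-2)}\to\operatorname{Der}(\mathcal{A})$ (the symbol) satisfying two conditions: (1) $\sigma_{\mathsf{C}}(x_1,\dots,x_{r-2})\langle u,w\rangle=\langle \mathsf{C}(x_1,\dots,x_{r-2},u),w\rangle+\langle u,\mathsf{C}(x_1,\dots,x_{r-2},w)\rangle$ for all arguments; (2) if $r\ge3$, then for all $x_1,\dots,x_{r-1},u\in\mathcal{E}$ and $1\le i\le r-2$, $\langle \mathsf{C}(\dots,x_i,x_{i+1},\dots)+\mathsf{C}(\dots,x_{i+1},x_i,\dots),u\rangle=\sigma_{\mathsf{C}}(x_1,\dots,\widehat{x_i},\widehat{x_{i+1}},\dots,x_{r-1},u)\langle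 x_i,x_{i+1}\rangle$. For $r=2$ the symbol is a single derivation. For $\mathsf{C}\in\mathcal{C}^r(\mathcal{E})$ with $r\ge2$ and $x\in\mathcal{E}$, $i_x\mathsf{C}$ denotes $\mathsf{C}$ with $x$ inserted in the first argument. One has $i_x\mathsf{C}\in\mathcal{C}^{r-1}(\mathcal{E})$. The bracket $[\cdot,\cdot]$ is the unique $R$-bilinear, graded skew-symmetric map ($[\mathsf{C}_1,\mathsf{C}_2]=-(-1)^{rs}[\mathsf{C}_2,\mathsf{C}_1]$) sending $\mathcal{C}^r\times\mathcal{C}^s$ to $\mathcal{C}^{r+s-2}$ such that, for $a,b\in\mathcal{A}$, $x,y\in\mathcal{E}$, $\mathsf{D}\in\mathcal{C}^2(\mathcal{E})$ and $\mathsf{C}\in\mathcal{C}^r(\mathcal{E})$ with $r\ge2$: - $[a,b]=0$ and $[a,x]=0=[x,a]$; - $[x,y]=\langle x,y\rangle$; - $[\mathsf{D},a]=\sigma_{\mathsf{D}}(a)=-[a,\mathsf{D}]$; - $[\mathsf{C},x]=i_x\mathsf{C}=(-1)^{r+1}[x,\mathsf{C}]$; - the recursion $[[\mathsf{C}_1,\mathsf{C}_2],x]=i_x[\mathsf{C}_1,\mathsf{C}_2]=(-1)^s[[\mathsf{C}_1,x],\mathsf{C}_2]+[\mathsf{C}_1,[\mathsf{C}_2,x]]$ holds for $\mathsf{C}_1\in\mathcal{C}^r$, $\mathsf{C}_2\in\mathcal{C}^s$. The product $\wedge$ is the unique $R$-bilinear product of degree $0$ on $\mathcal{C}^\bullet(\mathcal{E})$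 such that $a\wedge b=ab$, $a\wedge x=ax=x\wedge a$, and $[\mathsf{C}_1\wedge\mathsf{C}_2,x]=(-1)^s[\mathsf{C}_1,x]\wedge\mathsf{C}_2+\mathsf{C}_1\wedge[\mathsf{C}_2,x]$ for $\mathsf{C}_1\in\mathcal{C}^r,\mathsf{C}_2\in\mathcal{C}^s$, $x\in\mathcal{E}$. *)

theory Defs
  imports Complex_Main
begin

definition contains_rat :: "('r::comm_ring_1) itself \<Rightarrow> bool" where
  "contains_rat _ \<longleftrightarrow> (\<exists>\<phi>::rat \<Rightarrow> 'r. inj \<phi> \<and> \<phi> 1 = 1 \<and>
     (\<forall>p q. \<phi> (p + q) = \<phi> p + \<phi> q \<and> \<phi> (p * q) = \<phi> p * \<phi> q))"

definition algebra_map :: "('r::comm_ring_1 \<Rightarrow> 'a::comm_ring_1) \<Rightarrow> bool" where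
  "algebra_map \<iota> \<longleftrightarrow> \<iota> 1 = 1 \<and> (\<forall>s t. \<iota> (s + t) = \<iota> s + \<iota> t \<and> \<iota> (s * t) = \<iota> s * \<iota> t)"

text \<open>Finitely generated projective A-module: a direct summand of a free module A^n
  (p : E -> A^n, s : A^n -> E A-linear with s o p = id; A^n = functions nat => A supported on {..<n}).\<close>
definition fg_projective :: "('a::comm_ring_1 \<Rightarrow> 'e::ab_group_add \<Rightarrow> 'e) \<Rightarrow> bool" where
  "fg_projective smul \<longleftrightarrow> (\<exists>(n::nat) (p::'e \<Rightarrow> nat \<Rightarrow> 'a) (s::(nat \<Rightarrow> 'a) \<Rightarrow> 'e).
     (\<forall>x y. p (x + y) = (\<lambda>i. p x i + p y i)) \<and> (\<forall>a x. p (smul a x) = (\<lambda>i. a * p x i)) \<and>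
     (\<forall>x i. n \<le> i \<longrightarrow> p x i = 0) \<and>
     (\<forall>u v. s (\<lambda>i. u i + v i) = s u + s v) \<and> (\<forall>a u. s (\<lambda>i. a * u i) = smul a (s u)) \<and>
     (\<forall>x. s (p x) = x))"

definition A_linear_form :: "('a::comm_ring_1 \<Rightarrow> 'e::ab_group_add \<Rightarrow> 'e) \<Rightarrow> ('e \<Rightarrow> 'a) \<Rightarrow> bool" where
  "A_linear_form smul f \<longleftrightarrow> (\<forall>x y. f (x + y) = f x + f y) \<and> (\<forall>a x. f (smul a x) = a * f x)"

definition symmetric_bilinear :: "('a::comm_ring_1 \<Rightarrow> 'e::ab_group_add \<Rightarrow> 'e) \<Rightarrow> ('e \<Rightarrow> 'e \<Rightarrow> 'a) \<Rightarrow> bool" where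
  "symmetric_bilinear smul g \<longleftrightarrow> (\<forall>x y. g x y = g y x) \<and>
     (\<forall>x y z. g (x + y) z = g x z + g y z) \<and> (\<forall>a x z. g (smul a x) z = a * g x z)"

definition strongly_nondegenerate :: "('a::comm_ring_1 \<Rightarrow> 'e::ab_group_add \<Rightarrow> 'e) \<Rightarrow> ('e \<Rightarrow> 'e \<Rightarrow> 'a) \<Rightarrow> bool" where
  "strongly_nondegenerate smul g \<longleftrightarrow> bij_betw g UNIV {f. A_linear_form smul f}"

definition full_form :: "('e \<Rightarrow> 'e \<Rightarrow> 'a::comm_ring_1) \<Rightarrow> bool" where
  "full_form g \<longleftrightarrow> (\<forall>a. \<exists>ps. a = sum_list (map (\<lambda>(x, y). g x y) ps))"

definition is_derivation :: "('r::comm_ring_1 \<Rightarrow> 'a::comm_ring_1) \<Rightarrow> ('a \<Rightarrow> 'a) \<Rightarrow> bool" where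
  "is_derivation \<iota> D \<longleftrightarrow> (\<forall>a b. D (a + b) = D a + D b) \<and> (\<forall>t a. D (\<iota> t * a) = \<iota> t * D a) \<and>
     (\<forall>a b. D (a * b) = a * D b + b * D a)"

definition multilin :: "('r \<Rightarrow> 'e \<Rightarrow> 'e::ab_group_add) \<Rightarrow> ('r \<Rightarrow> 'b \<Rightarrow> 'b::ab_group_add) \<Rightarrow> nat \<Rightarrow> ('e list \<Rightarrow> 'b) \<Rightarrow> bool" where
  "multilin sE sB k F \<longleftrightarrow> (\<forall>xs i u v t. length xs = k \<longrightarrow> i < k \<longrightarrow>
      F (xs[i := u + v]) = F (xs[i := u]) + F (xs[i := v]) \<and>
      F (xs[i := sE t u]) = sB t (F (xs[i := u])))"

definition is_symbol :: "('r::comm_ring_1 \<Rightarrow> 'a::comm_ring_1) \<Rightarrow> ('a \<Rightarrow> 'e::ab_group_add \<Rightarrow> 'e) \<Rightarrow>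
    ('e \<Rightarrow> 'e \<Rightarrow> 'a) \<Rightarrow> nat \<Rightarrow> ('e list \<Rightarrow> 'e) \<Rightarrow> ('e list \<Rightarrow> 'a \<Rightarrow> 'a) \<Rightarrow> bool" where
  "is_symbol \<iota> smul g r F \<sigma> \<longleftrightarrow>
     (\<forall>xs. length xs = r - 2 \<longrightarrow> is_derivation \<iota> (\<sigma> xs)) \<and>
     (\<forall>a. multilin (\<lambda>t. smul (\<iota> t)) (\<lambda>t b. \<iota> t * b) (r - 2) (\<lambda>xs. \<sigma> xs a)) \<and>
     (\<forall>xs u w. length xs = r - 2 \<longrightarrow>
        \<sigma> xs (g u w) = g (F (xs @ [u])) w + g u (F (xs @ [w]))) \<and>
     (3 \<le> r \<longrightarrow> (\<forall>xs u i. length xs = r - 1 \<longrightarrow> i < r - 2 \<longrightarrow>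
        g (F xs + F (xs[i := xs ! (i+1), i+1 := xs ! i])) u =
        \<sigma> (take i xs @ drop (i + 2) xs @ [u]) (g (xs ! i) (xs ! (i+1)))))"

text \<open>F represents an element of C^r(E), r \<ge> 2: an R-multilinear map E^(r-1) \<rightarrow> E
  (as a function on lists, canonically extended by 0 on lists of other lengths) admitting a symbol.\<close>
definition is_Cop :: "('r::comm_ring_1 \<Rightarrow> 'a::comm_ring_1) \<Rightarrow> ('a \<Rightarrow> 'e::ab_group_add \<Rightarrow> 'e) \<Rightarrow>
    ('e \<Rightarrow> 'e \<Rightarrow> 'a) \<Rightarrow> nat \<Rightarrow> ('e list \<Rightarrow> 'e) \<Rightarrow> bool" where
  "is_Cop \<iota> smul g r F \<longleftrightarrow> 2 \<le> r \<and>
     multilin (\<lambda>t. smul (\<iota> t)) (\<lambda>t. smul (\<iota> t)) (r - 1) F \<and>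
     (\<forall>xs. length xs \<noteq> r - 1 \<longrightarrow> F xs = 0) \<and>
     (\<exists>\<sigma>. is_symbol \<iota> smul g r F \<sigma>)"

text \<open>An element of the direct sum: its degree-0 component (in A), degree-1 component (in E),
  and its degree-r components for r \<ge> 2 (cr c r; cr c 0 and cr c 1 are required to be 0).\<close>
record ('a, 'e) cochain =
  c0 :: 'a
  c1 :: 'e
  cr :: "nat \<Rightarrow> 'e list \<Rightarrow> 'e"

definition in_C :: "('r::comm_ring_1 \<Rightarrow> 'a::comm_ring_1) \<Rightarrow> ('a \<Rightarrow> 'e::ab_group_add \<Rightarrow> 'e) \<Rightarrow>
    ('e \<Rightarrow> 'e \<Rightarrow> 'a) \<Rightarrow> ('a, 'e) cochain \<Rightarrow> bool" where
  "in_C \<iota> smul g c \<longleftrightarrow> cr c 0 = (\<lambda>_. 0) \<and> cr c 1 = (\<lambda>_. 0) \<and>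
     (\<forall>r. 2 \<le> r \<longrightarrow> is_Cop \<iota> smul g r (cr c r)) \<and> finite {r. cr c r \<noteq> (\<lambda>_. 0)}"

definition czero :: "('a::zero, 'e::zero) cochain" where
  "czero = \<lparr>c0 = 0, c1 = 0, cr = (\<lambda>_ _. 0)\<rparr>"

definition cadd :: "('a::plus, 'e::plus) cochain \<Rightarrow> ('a, 'e) cochain \<Rightarrow> ('a, 'e) cochain" where
  "cadd c d = \<lparr>c0 = c0 c + c0 d, c1 = c1 c + c1 d, cr = (\<lambda>r xs. cr c r xs + cr d r xs)\<rparr>"

definition cneg :: "('a::uminus, 'e::uminus) cochain \<Rightarrow> ('a, 'e) cochain" where
  "cneg c = \<lparr>c0 = - c0 c, c1 = - c1 c, cr = (\<lambda>r xs. - cr c r xs)\<rparr>"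

definition csign :: "nat \<Rightarrow> ('a::uminus, 'e::uminus) cochain \<Rightarrow> ('a, 'e) cochain" where
  "csign n c = (if even n then c else cneg c)"

definition cscale :: "('r \<Rightarrow> 'a::times) \<Rightarrow> ('a \<Rightarrow> 'e \<Rightarrow> 'e) \<Rightarrow> 'r \<Rightarrow> ('a, 'e) cochain \<Rightarrow> ('a, 'e) cochain" where
  "cscale \<iota> smul t c = \<lparr>c0 = \<iota> t * c0 c, c1 = smul (\<iota> t) (c1 c), cr = (\<lambda>r xs. smul (\<iota> t) (cr c r xs))\<rparr>"

definition emb0 :: "'a \<Rightarrow> ('a::zero, 'e::zero) cochain" where
  "emb0 a = \<lparr>c0 = a, c1 = 0, cr = (\<lambda>_ _. 0)\<rparr>"

definition emb1 :: "'e \<Rightarrow> ('a::zero, 'e::zero) cochain" where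
  "emb1 x = \<lparr>c0 = 0, c1 = x, cr = (\<lambda>_ _. 0)\<rparr>"

definition embr :: "nat \<Rightarrow> ('e list \<Rightarrow> 'e) \<Rightarrow> ('a::zero, 'e::zero) cochain" where
  "embr r F = \<lparr>c0 = 0, c1 = 0, cr = (\<lambda>k. if k = r then F else (\<lambda>_. 0))\<rparr>"

definition homog :: "('r::comm_ring_1 \<Rightarrow> 'a::comm_ring_1) \<Rightarrow> ('a \<Rightarrow> 'e::ab_group_add \<Rightarrow> 'e) \<Rightarrow>
    ('e \<Rightarrow> 'e \<Rightarrow> 'a) \<Rightarrow> nat \<Rightarrow> ('a, 'e) cochain \<Rightarrow> bool" where
  "homog \<iota> smul g r c \<longleftrightarrow> in_C \<iota> smul g c \<and> (r \<noteq> 0 \<longrightarrow> c0 c = 0) \<and> (r \<noteq> 1 \<longrightarrow> c1 c = 0) \<and>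
     (\<forall>k. k \<noteq> r \<longrightarrow> cr c k = (\<lambda>_. 0))"

definition homog_int :: "('r::comm_ring_1 \<Rightarrow> 'a::comm_ring_1) \<Rightarrow> ('a \<Rightarrow> 'e::ab_group_add \<Rightarrow> 'e) \<Rightarrow>
    ('e \<Rightarrow> 'e \<Rightarrow> 'a) \<Rightarrow> int \<Rightarrow> ('a, 'e) cochain \<Rightarrow> bool" where
  "homog_int \<iota> smul g d c \<longleftrightarrow> (if d < 0 then c = czero else homog \<iota> smul g (nat d) c)"

definition ins :: "nat \<Rightarrow> 'e \<Rightarrow> ('a::zero, 'e::zero) cochain \<Rightarrow> ('a, 'e) cochain" where
  "ins r x c = (if r = 2 then emb1 (cr c 2 [x])
     else embr (r - 1) (\<lambda>xs. if length xs = r - 2 then cr c r (x # xs) else 0))"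

definition is_bracket :: "('r::comm_ring_1 \<Rightarrow> 'a::comm_ring_1) \<Rightarrow> ('a \<Rightarrow> 'e::ab_group_add \<Rightarrow> 'e) \<Rightarrow>
    ('e \<Rightarrow> 'e \<Rightarrow> 'a) \<Rightarrow> (('a, 'e) cochain \<Rightarrow> ('a, 'e) cochain \<Rightarrow> ('a, 'e) cochain) \<Rightarrow> bool" where
  "is_bracket \<iota> smul g br \<longleftrightarrow>
    \<comment> \<open>R-bilinear on C^\<bullet>(E)\<close>
    (\<forall>c c' d. in_C \<iota> smul g c \<longrightarrow> in_C \<iota> smul g c' \<longrightarrow> in_C \<iota> smul g d \<longrightarrow>
        br (cadd c c') d = cadd (br c d) (br c' d) \<and> br d (cadd c c') = cadd (br d c) (br d c')) \<and>
    (\<forall>t c d. in_C \<iota> smul g c \<longrightarrow> in_C \<iota> smul g d \<longrightarrow>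
        br (cscale \<iota> smul t c) d = cscale \<iota> smul t (br c d) \<and>
        br d (cscale \<iota> smul t c) = cscale \<iota> smul t (br d c)) \<and>
    \<comment> \<open>C^r \<times> C^s \<rightarrow> C^(r+s-2)\<close>
    (\<forall>r s c d. homog \<iota> smul g r c \<longrightarrow> homog \<iota> smul g s d \<longrightarrow>
        homog_int \<iota> smul g (int r + int s - 2) (br c d)) \<and>
    \<comment> \<open>graded skew-symmetry\<close>
    (\<forall>r s c d. homog \<iota> smul g r c \<longrightarrow> homog \<iota> smul g s d \<longrightarrow>
        br c d = cneg (csign (r * s) (br d c))) \<and>
    (\<forall>a b. br (emb0 a) (emb0 b) = czero) \<and>
    (\<forall>a x. br (emb0 a) (emb1 x) = czero \<and> br (emb1 x) (emb0 a) = czero) \<and>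
    (\<forall>x y. br (emb1 x) (emb1 y) = emb0 (g x y)) \<and>
    (\<forall>F \<sigma> a. is_Cop \<iota> smul g 2 F \<longrightarrow> is_symbol \<iota> smul g 2 F \<sigma> \<longrightarrow>
        br (embr 2 F) (emb0 a) = emb0 (\<sigma> [] a) \<and> br (emb0 a) (embr 2 F) = cneg (emb0 (\<sigma> [] a))) \<and>
    (\<forall>r c x. 2 \<le> r \<longrightarrow> homog \<iota> smul g r c \<longrightarrow>
        br c (emb1 x) = ins r x c \<and> ins r x c = csign (r + 1) (br (emb1 x) c)) \<and>
    \<comment> \<open>recursion\<close>
    (\<forall>r s c1 c2 x. homog \<iota> smul g r c1 \<longrightarrow> homog \<iota> smul g s c2 \<longrightarrow>
        br (br c1 c2) (emb1 x) =
          cadd (csign s (br (br c1 (emb1 x)) c2)) (br c1 (br c2 (emb1 x))))"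

definition is_wedge :: "('r::comm_ring_1 \<Rightarrow> 'a::comm_ring_1) \<Rightarrow> ('a \<Rightarrow> 'e::ab_group_add \<Rightarrow> 'e) \<Rightarrow>
    ('e \<Rightarrow> 'e \<Rightarrow> 'a) \<Rightarrow> (('a, 'e) cochain \<Rightarrow> ('a, 'e) cochain \<Rightarrow> ('a, 'e) cochain) \<Rightarrow>
    (('a, 'e) cochain \<Rightarrow> ('a, 'e) cochain \<Rightarrow> ('a, 'e) cochain) \<Rightarrow> bool" where
  "is_wedge \<iota> smul g br wd \<longleftrightarrow>
    (\<forall>c c' d. in_C \<iota> smul g c \<longrightarrow> in_C \<iota> smul g c' \<longrightarrow> in_C \<iota> smul g d \<longrightarrow>
        wd (cadd c c') d = cadd (wd c d) (wd c' d) \<and> wd d (cadd c c') = cadd (wd d c) (wd d c')) \<and>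
    (\<forall>t c d. in_C \<iota> smul g c \<longrightarrow> in_C \<iota> smul g d \<longrightarrow>
        wd (cscale \<iota> smul t c) d = cscale \<iota> smul t (wd c d) \<and>
        wd d (cscale \<iota> smul t c) = cscale \<iota> smul t (wd d c)) \<and>
    (\<forall>r s c d. homog \<iota> smul g r c \<longrightarrow> homog \<iota> smul g s d \<longrightarrow> homog \<iota> smul g (r + s) (wd c d)) \<and>
    (\<forall>a b. wd (emb0 a) (emb0 b) = emb0 (a * b)) \<and>
    (\<forall>a x. wd (emb0 a) (emb1 x) = emb1 (smul a x) \<and> wd (emb1 x) (emb0 a) = emb1 (smul a x)) \<and>
    (\<forall>r s c1 c2 x. homog \<iota> smul g r c1 \<longrightarrow> homog \<iota> smul g s c2 \<longrightarrow>
        br (wd c1 c2) (emb1 x) =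
          cadd (csign s (wd (br c1 (emb1 x)) c2)) (wd c1 (br c2 (emb1 x))))"

end

theory Submission
  imports Defs
begin

text \<open>Bracket and product are only pinned down in degrees \<open>\<le> 1\<close> and by how they interact with
  bracketing with \<open>x \<in> E\<close>. Since \<open>[C, x] = i\<^sub>x C\<close> and the form is nondegenerate, an element
  of positive degree is determined by its brackets with \<open>E\<close>. Every identity is therefore proved
  by induction on the total degree. For the Jacobi identity and the Leibniz rule one brackets the
  defect \<open>[p, q \<star> u] - [p, q] \<star> u - (-1)\<^sup>r\<^sup>s q \<star> [p, u]\<close> (with \<open>\<star>\<close> the bracket or the product)
  with \<open>x\<close>: the recursion turns it into a signed sum of the defects of \<open>([p, x], q, u)\<close>,
  \<open>(p, [q, x], u)\<close> and \<open>(p, q, [u, x])\<close>, which have lower total degree. Insertion stops detecting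
  anything when the defect has degree \<open>0\<close>, i.e. in total degree \<open>4\<close> for the Jacobi identity and
  \<open>2\<close> for the Leibniz rule. There the identities become statements about the symbols of elements
  of \<open>C\<^sup>2(E)\<close> and \<open>C\<^sup>4(E)\<close>, which are derivations of \<open>A\<close> and are checked on the additive
  generators \<open>\<langle>u, w\<rangle>\<close> of \<open>A\<close> (fullness). Graded commutativity and associativity of \<open>\<and>\<close> follow
  from the same insertion induction, and associativity extends to all of \<open>C\<^sup>\<bullet>(E)\<close> by
  bilinearity.\<close>

lemma cochain_eqI:
  fixes c d :: "('a, 'e) cochain"
  assumes "c0 c = c0 d" "c1 c = c1 d" "\<And>r xs. cr c r xs = cr d r xs"
  shows "c = d"
  using assms by (cases c, cases d) auto

lemmas cochain_defs = cadd_def cneg_def csign_def czero_def emb0_def emb1_def embr_def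

context
  fixes c :: "('a::ab_group_add, 'e::ab_group_add) cochain"
begin

lemma cadd_czero_left [simp]: "cadd czero c = c"
  and cadd_czero_right [simp]: "cadd c czero = c"
  and cneg_cneg [simp]: "cneg (cneg c) = c"
  by (rule cochain_eqI; simp add: cochain_defs)+

lemma cadd_self_eq_czero: "cadd c c = c \<Longrightarrow> c = czero"
  by (rule cochain_eqI; drule arg_cong[where f = c0] arg_cong[where f = c1]
      arg_cong[where f = "\<lambda>c. cr c _ _"]; simp add: cochain_defs)

lemma csign_cong: "(even m \<longleftrightarrow> even n) \<or> c = czero \<Longrightarrow> csign m c = csign n c"
  by (auto simp: csign_def cochain_defs)

lemma csign_pred_mult:
  assumes "r \<noteq> 0"
  shows "csign ((r - 1) * s) c = csign ((r + 1) * s) c"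
    and "csign (s * (r - 1)) c = csign (s * (r + 1)) c"
  using assms by (auto intro!: csign_cong simp: not0_implies_Suc)

lemma csign_diff_even:
  assumes "even m" "n < m \<Longrightarrow> c = czero"
  shows "csign (n - m) c = csign n c"
  using assms by (intro csign_cong) auto

end

lemma cneg_czero [simp]: "cneg czero = (czero :: ('a::ab_group_add, 'e::ab_group_add) cochain)"
  and csign_czero [simp]: "csign n czero = (czero :: ('a::ab_group_add, 'e::ab_group_add) cochain)"
  and emb0_zero [simp]: "emb0 0 = (czero :: ('a::ab_group_add, 'e::ab_group_add) cochain)"
  and emb1_zero [simp]: "emb1 0 = (czero :: ('a::ab_group_add, 'e::ab_group_add) cochain)"
  by (rule cochain_eqI; simp add: cochain_defs)+

lemma cadd_cneg_eq_czero_iff: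
  fixes c d :: "('a::ab_group_add, 'e::ab_group_add) cochain"
  shows "cadd c (cneg d) = czero \<longleftrightarrow> c = d"
proof
  assume "cadd c (cneg d) = czero"
  from arg_cong[OF this, where f = c0] arg_cong[OF this, where f = c1]
    arg_cong[OF this, where f = "\<lambda>c. cr c _ _"]
  show "c = d" by (intro cochain_eqI) (simp_all add: cochain_defs)
qed (rule cochain_eqI; simp add: cochain_defs)

lemma emb0_add: "emb0 (a + b) = (cadd (emb0 a) (emb0 b) :: ('a::ab_group_add, 'e::ab_group_add) cochain)"
  by (rule cochain_eqI) (simp_all add: cochain_defs)

lemma derivation_scalar_eq_0:
  assumes "is_derivation \<iota> D"
  shows "D (\<iota> t) = 0"
proof -
  have "D (\<iota> t * 1) = \<iota> t * D 1 + 1 * D (\<iota> t)" "D (\<iota> t * 1) = \<iota> t * D 1"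
    using assms unfolding is_derivation_def by blast+
  then show ?thesis by simp
qed

lemma is_derivation_add:
  assumes "is_derivation \<iota> D" "is_derivation \<iota> D'"
  shows "is_derivation \<iota> (\<lambda>a. D a + D' a)"
  using assms derivation_scalar_eq_0[OF assms(1)] derivation_scalar_eq_0[OF assms(2)]
  unfolding is_derivation_def by (simp add: algebra_simps)

lemma is_derivation_uminus:
  assumes "is_derivation \<iota> D"
  shows "is_derivation \<iota> (\<lambda>a. - D a)"
  using assms derivation_scalar_eq_0[OF assms] unfolding is_derivation_def by (simp add: algebra_simps)

lemma is_derivation_zero: "is_derivation \<iota> (\<lambda>a. 0)"
  by (simp add: is_derivation_def)

lemma derivation_add: "is_derivation \<iota> D \<Longrightarrow> D (a + b) = D a + D b"
  and derivation_mult: "is_derivation \<iota> D \<Longrightarrow> D (a * b) = a * D b + b * D a"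
  by (simp_all add: is_derivation_def)

lemma derivation_minus: "is_derivation \<iota> D \<Longrightarrow> D (- a) = - D a"
  using derivation_add[of \<iota> D a "- a"] derivation_add[of \<iota> D 0 0] by (simp add: eq_neg_iff_add_eq_0)

section \<open>The graded space \<open>C\<^sup>\<bullet>(E)\<close>\<close>

locale symmetric_form_module =
  fixes \<iota> :: "'r::comm_ring_1 \<Rightarrow> 'a::comm_ring_1"
    and smul :: "'a \<Rightarrow> 'e::ab_group_add \<Rightarrow> 'e"
    and g :: "'e \<Rightarrow> 'e \<Rightarrow> 'a"
  assumes algebra_map: "algebra_map \<iota>"
    and module: "module smul"
    and symmetric_bilinear: "symmetric_bilinear smul g"
begin

interpretation M: module smul by (rule module)

abbreviation "C \<equiv> in_C \<iota> smul g"
abbreviation "H \<equiv> homog \<iota> smul g"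

lemma g_commute: "g x y = g y x"
  and g_add_left: "g (x + y) z = g x z + g y z"
  and g_scale_left: "g (smul a x) z = a * g x z"
  using symmetric_bilinear unfolding symmetric_bilinear_def by blast+

lemma g_add_right: "g z (x + y) = g z x + g z y"
  and g_scale_right: "g z (smul a x) = a * g z x"
  by (simp_all add: g_commute[of z] g_add_left g_scale_left)

lemma g_zero_left [simp]: "g 0 z = 0"
  and g_zero_right [simp]: "g z 0 = 0"
  using g_add_left[of 0 0 z] by (simp_all add: g_commute[of z])

lemma g_minus_left: "g (- x) z = - g x z"
  using g_add_left[of x "- x" z] by (simp add: eq_neg_iff_add_eq_0 add.commute)

lemma g_minus_right: "g z (- x) = - g z x"
  and g_diff_left: "g (x - y) z = g x z - g y z"
  and g_diff_right: "g z (x - y) = g z x - g z y"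
  using g_add_left[of x "- y" z] g_add_left[of z "- y" x]
  by (simp_all add: g_commute[of z] g_minus_left)

lemma cneg_eq_cscale: "cneg c = cscale \<iota> smul (- 1) c"
proof -
  have "\<iota> 1 = 1" "\<iota> (1 + - 1) = \<iota> 1 + \<iota> (- 1)" "\<iota> (0 + 0) = \<iota> 0 + \<iota> 0"
    using algebra_map unfolding algebra_map_def by blast+
  then have "\<iota> (- 1) = - 1"
    by (simp add: eq_neg_iff_add_eq_0 add.commute)
  then show ?thesis by (intro cochain_eqI) (simp_all add: cneg_def cscale_def)
qed

lemma is_symbol_add:
  assumes \<sigma>: "is_symbol \<iota> smul g r F \<sigma>" and \<tau>: "is_symbol \<iota> smul g r G \<tau>"
  shows "is_symbol \<iota> smul g r (\<lambda>xs. F xs + G xs) (\<lambda>xs a. \<sigma> xs a + \<tau> xs a)"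
proof -
  have swap: "g (F xs + G xs + (F ys + G ys)) u = g (F xs + F ys) u + g (G xs + G ys) u"
    for xs ys u by (simp add: g_add_left)
  show ?thesis
    using \<sigma> \<tau> unfolding is_symbol_def swap
    by (auto simp: is_derivation_add multilin_def g_add_left g_add_right algebra_simps)
qed

lemma is_symbol_uminus:
  assumes "is_symbol \<iota> smul g r F \<sigma>"
  shows "is_symbol \<iota> smul g r (\<lambda>xs. - F xs) (\<lambda>xs a. - \<sigma> xs a)"
proof -
  have swap: "g (- F xs + - F ys) u = - g (F xs + F ys) u" for xs ys u
    by (metis g_minus_left g_add_left minus_add_distrib)
  show ?thesis
    using assms unfolding is_symbol_def swap
    by (auto simp: is_derivation_uminus multilin_def g_minus_left g_minus_right)
qed

lemma is_Cop_zero: "2 \<le> r \<Longrightarrow> is_Cop \<iota> smul g r (\<lambda>_. 0)"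
  unfolding is_Cop_def
  by (auto intro!: exI[of _ "\<lambda>_ _. 0"] simp: is_symbol_def is_derivation_zero multilin_def)

lemma is_Cop_add: "is_Cop \<iota> smul g r F \<Longrightarrow> is_Cop \<iota> smul g r G \<Longrightarrow> is_Cop \<iota> smul g r (\<lambda>xs. F xs + G xs)"
  unfolding is_Cop_def by (auto intro: is_symbol_add simp: multilin_def M.scale_right_distrib)

lemma is_Cop_uminus: "is_Cop \<iota> smul g r F \<Longrightarrow> is_Cop \<iota> smul g r (\<lambda>xs. - F xs)"
  unfolding is_Cop_def by (auto intro: is_symbol_uminus simp: multilin_def)

lemma C_czero [simp]: "C czero"
  by (simp add: in_C_def czero_def is_Cop_zero[unfolded fun_eq_iff])

lemma C_cadd [simp]: "C c \<Longrightarrow> C d \<Longrightarrow> C (cadd c d)"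
  unfolding in_C_def cadd_def
  by (auto intro!: is_Cop_add
      intro: finite_subset[of _ "{r. cr c r \<noteq> (\<lambda>_. 0)} \<union> {r. cr d r \<noteq> (\<lambda>_. 0)}"])

lemma C_cneg [simp]: "C c \<Longrightarrow> C (cneg c)"
  unfolding in_C_def cneg_def
  by (auto intro!: is_Cop_uminus simp: fun_eq_iff
      intro: finite_subset[of _ "{r. cr c r \<noteq> (\<lambda>_. 0)}"])

lemma C_csign [simp]: "C c \<Longrightarrow> C (csign n c)"
  by (simp add: csign_def)

lemma homog_imp_C: "H r c \<Longrightarrow> C c"
  by (simp add: homog_def)

lemma homog_czero [simp]: "H r czero"
  using C_czero by (simp add: homog_def czero_def)

lemma homog_cadd [simp]: "H r c \<Longrightarrow> H r d \<Longrightarrow> H r (cadd c d)"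
  using C_cadd[of c d] by (simp add: homog_def cadd_def)

lemma homog_cneg [simp]: "H r c \<Longrightarrow> H r (cneg c)"
  using C_cneg[of c] by (simp add: homog_def cneg_def)

lemma homog_csign [simp]: "H r c \<Longrightarrow> H r (csign n c)"
  by (simp add: csign_def)

lemma homog_emb0 [simp]: "H 0 (emb0 a)"
  and homog_emb1 [simp]: "H 1 (emb1 x)"
  by (simp_all add: homog_def in_C_def cochain_defs is_Cop_zero)

lemma homog_embr: "is_Cop \<iota> smul g r F \<Longrightarrow> H r (embr r F)"
  by (auto simp: homog_def in_C_def cochain_defs is_Cop_zero) (auto simp: is_Cop_def)

lemma C_emb0 [simp]: "C (emb0 a)"
  and C_emb1 [simp]: "C (emb1 x)"
  by (simp_all add: homog_imp_C[OF homog_emb0] homog_imp_C[OF homog_emb1])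

lemma homog_0_eq_emb0: "H 0 c \<Longrightarrow> c = emb0 (c0 c)"
  unfolding homog_def in_C_def
  by (intro cochain_eqI; simp add: cochain_defs) (metis neq0_conv)

lemma homog_1_eq_emb1: "H 1 c \<Longrightarrow> c = emb1 (c1 c)"
  unfolding homog_def in_C_def
  by (intro cochain_eqI; simp add: cochain_defs) (metis One_nat_def)

lemma homog_eq_embr: "2 \<le> r \<Longrightarrow> H r c \<Longrightarrow> c = embr r (cr c r)"
  unfolding homog_def by (intro cochain_eqI) (auto simp: cochain_defs)

lemma homog_is_Cop: "2 \<le> r \<Longrightarrow> H r c \<Longrightarrow> is_Cop \<iota> smul g r (cr c r)"
  by (simp add: homog_def in_C_def)

lemma in_C_induct [consumes 1, case_names czero homog cadd]:
  assumes "C c"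
    and zero: "P czero"
    and homog: "\<And>r c. H r c \<Longrightarrow> P c"
    and add: "\<And>c d. C c \<Longrightarrow> C d \<Longrightarrow> P c \<Longrightarrow> P d \<Longrightarrow> P (cadd c d)"
  shows "P c"
proof -
  define part :: "nat set \<Rightarrow> ('a, 'e) cochain"
    where "part S = \<lparr>c0 = 0, c1 = 0, cr = (\<lambda>r. if r \<in> S then cr c r else (\<lambda>_. 0))\<rparr>" for S
  have part: "C (part S) \<and> P (part S)" if "finite S" for S
    using that
  proof (induction S rule: finite_induct)
    case empty
    have "part {} = czero" by (simp add: part_def czero_def)
    then show ?case using zero by simp
  next
    case (insert k S)
    have split: "part (insert k S) = cadd (embr k (cr c k)) (part S)"
      using insert(2) by (intro cochain_eqI) (auto simp: part_def cochain_defs)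
    have "H k (embr k (cr c k))"
    proof (cases "2 \<le> k")
      case True
      then show ?thesis using \<open>C c\<close> homog_embr unfolding in_C_def by blast
    next
      case False
      then have "k = 0 \<or> k = 1" by arith
      with \<open>C c\<close> have "embr k (cr c k) = (czero :: ('a, 'e) cochain)"
        unfolding in_C_def by (intro cochain_eqI) (auto simp: cochain_defs)
      then show ?thesis by (simp only: homog_czero)
    qed
    then show ?case using insert.IH split add homog homog_imp_C by simp
  qed
  define S where "S = {r. cr c r \<noteq> (\<lambda>_. 0)}"
  have "finite S" using \<open>C c\<close> unfolding in_C_def S_def by simp
  moreover have "c = cadd (emb0 (c0 c)) (cadd (emb1 (c1 c)) (part S))"
    by (intro cochain_eqI) (auto simp: cochain_defs part_def S_def)
  ultimately show ?thesis
    using part add homog[OF homog_emb0] homog[OF homog_emb1] by (metis C_cadd C_emb0 C_emb1)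
qed

end

locale graded_bilinear = symmetric_form_module \<iota> smul g
  for \<iota> :: "'r::comm_ring_1 \<Rightarrow> 'a::comm_ring_1" and smul :: "'a \<Rightarrow> 'e::ab_group_add \<Rightarrow> 'e" and g +
  fixes op :: "('a, 'e) cochain \<Rightarrow> ('a, 'e) cochain \<Rightarrow> ('a, 'e) cochain"
    and \<delta> :: nat
  assumes op_cadd_left: "C c \<Longrightarrow> C c' \<Longrightarrow> C d \<Longrightarrow> op (cadd c c') d = cadd (op c d) (op c' d)"
    and op_cadd_right: "C c \<Longrightarrow> C c' \<Longrightarrow> C d \<Longrightarrow> op d (cadd c c') = cadd (op d c) (op d c')"
    and op_cscale_left: "C c \<Longrightarrow> C d \<Longrightarrow> op (cscale \<iota> smul k c) d = cscale \<iota> smul k (op c d)"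
    and op_cscale_right: "C c \<Longrightarrow> C d \<Longrightarrow> op d (cscale \<iota> smul k c) = cscale \<iota> smul k (op d c)"
    and homog_op: "H s c \<Longrightarrow> H t d \<Longrightarrow> H (s + t - \<delta>) (op c d)"
    and op_eq_czero_if_deg_less: "H s c \<Longrightarrow> H t d \<Longrightarrow> s + t < \<delta> \<Longrightarrow> op c d = czero"
begin

lemma op_czero_left [simp]: "C d \<Longrightarrow> op czero d = czero"
  and op_czero_right [simp]: "C d \<Longrightarrow> op d czero = czero"
  using op_cadd_left[of czero czero d] op_cadd_right[of czero czero d]
  by (simp_all add: cadd_self_eq_czero)

lemma C_op [simp]:
  assumes "C c" "C d"
  shows "C (op c d)"
  using assms
proof (induction c rule: in_C_induct)
  case (homog r c)
  from \<open>C d\<close> show ?case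
  proof (induction d rule: in_C_induct)
    case (homog s d)
    with \<open>H r c\<close> show ?case by (blast intro: homog_imp_C homog_op)
  qed (use \<open>H r c\<close> homog_imp_C in \<open>simp_all add: op_cadd_right\<close>)
qed (simp_all add: op_cadd_left)

lemma op_cneg_left: "C c \<Longrightarrow> C d \<Longrightarrow> op (cneg c) d = cneg (op c d)"
  and op_cneg_right: "C c \<Longrightarrow> C d \<Longrightarrow> op d (cneg c) = cneg (op d c)"
  by (simp_all add: cneg_eq_cscale op_cscale_left op_cscale_right)

lemma op_csign_left: "C c \<Longrightarrow> C d \<Longrightarrow> op (csign n c) d = csign n (op c d)"
  and op_csign_right: "C c \<Longrightarrow> C d \<Longrightarrow> op d (csign n c) = csign n (op d c)"
  by (simp_all add: csign_def op_cneg_left op_cneg_right)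

end

locale cochain_bracket = symmetric_form_module \<iota> smul g
  for \<iota> :: "'r::comm_ring_1 \<Rightarrow> 'a::comm_ring_1" and smul :: "'a \<Rightarrow> 'e::ab_group_add \<Rightarrow> 'e" and g +
  fixes br :: "('a, 'e) cochain \<Rightarrow> ('a, 'e) cochain \<Rightarrow> ('a, 'e) cochain"
  assumes nondegenerate: "inj g"
    and full: "full_form g"
    and bracket: "is_bracket \<iota> smul g br"
begin

lemma br_cadd_left: "C c \<Longrightarrow> C c' \<Longrightarrow> C d \<Longrightarrow> br (cadd c c') d = cadd (br c d) (br c' d)"
  using bracket unfolding is_bracket_def by (elim conjE) metis

lemma br_cadd_right: "C c \<Longrightarrow> C c' \<Longrightarrow> C d \<Longrightarrow> br d (cadd c c') = cadd (br d c) (br d c')"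
  using bracket unfolding is_bracket_def by (elim conjE) metis

lemma br_cscale_left: "C c \<Longrightarrow> C d \<Longrightarrow> br (cscale \<iota> smul t c) d = cscale \<iota> smul t (br c d)"
  using bracket unfolding is_bracket_def by (elim conjE) metis

lemma br_cscale_right: "C c \<Longrightarrow> C d \<Longrightarrow> br d (cscale \<iota> smul t c) = cscale \<iota> smul t (br d c)"
  using bracket unfolding is_bracket_def by (elim conjE) metis

lemma homog_int_br: "H r c \<Longrightarrow> H s d \<Longrightarrow> homog_int \<iota> smul g (int r + int s - 2) (br c d)"
  using bracket unfolding is_bracket_def by (elim conjE) metis

lemma br_skew: "H r c \<Longrightarrow> H s d \<Longrightarrow> br c d = cneg (csign (r * s) (br d c))"
  using bracket unfolding is_bracket_def by (elim conjE) metis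

lemma br_emb0_emb0: "br (emb0 a) (emb0 b) = czero"
  using bracket unfolding is_bracket_def by (elim conjE) metis

lemma br_emb0_emb1: "br (emb0 a) (emb1 x) = czero"
  using bracket unfolding is_bracket_def by (elim conjE) metis

lemma br_emb1_emb1: "br (emb1 x) (emb1 y) = emb0 (g x y)"
  using bracket unfolding is_bracket_def by (elim conjE) metis

lemma br_embr2_emb0: "is_Cop \<iota> smul g 2 F \<Longrightarrow> is_symbol \<iota> smul g 2 F \<sigma> \<Longrightarrow>
      br (embr 2 F) (emb0 a) = emb0 (\<sigma> [] a)"
  using bracket unfolding is_bracket_def by (elim conjE) metis

lemma br_emb1_eq_ins: "2 \<le> r \<Longrightarrow> H r c \<Longrightarrow> br c (emb1 x) = ins r x c"
  using bracket unfolding is_bracket_def by (elim conjE) metis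

lemma br_br_emb1: "H r c \<Longrightarrow> H s d \<Longrightarrow>
      br (br c d) (emb1 x) = cadd (csign s (br (br c (emb1 x)) d)) (br c (br d (emb1 x)))"
  using bracket unfolding is_bracket_def by (elim conjE) metis

lemma homog_br:
  assumes "H r c" "H s d"
  shows "H (r + s - 2) (br c d)"
proof -
  have "nat (int r + int s - 2) = r + s - 2" by arith
  then show ?thesis using homog_int_br[OF assms] by (auto simp: homog_int_def split: if_splits)
qed

lemma br_eq_czero_if_deg_less: "H r c \<Longrightarrow> H s d \<Longrightarrow> r + s < 2 \<Longrightarrow> br c d = czero"
  using homog_int_br[of r c s d] by (simp add: homog_int_def)

sublocale bracket: graded_bilinear \<iota> smul g br 2
  by unfold_locales (simp_all add: br_cadd_left br_cadd_right br_cscale_left br_cscale_right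
      homog_br br_eq_czero_if_deg_less)

lemma homog_br_emb1: "H r c \<Longrightarrow> H (r - 1) (br c (emb1 x))"
  using homog_br[of r c 1 "emb1 x"] homog_emb1[of x] by simp

lemma br_emb1_eq_czero_if_deg0: "H 0 c \<Longrightarrow> br c (emb1 x) = czero"
  using br_eq_czero_if_deg_less[of 0 c 1 "emb1 x"] homog_emb1[of x] by simp

text \<open>In degree \<open>1\<close> this is the nondegeneracy of \<open>g\<close>; in higher degree \<open>[c, x] = i\<^sub>x c\<close>.\<close>
lemma eq_czero_if_insertions_vanish:
  assumes "1 \<le> n" "H n c" and vanish: "\<And>x. br c (emb1 x) = czero"
  shows "c = czero"
proof (cases "n = 1")
  case True
  then have c: "c = emb1 (c1 c)" using homog_1_eq_emb1 assms by simp
  have "g (c1 c) x = 0" for x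
    using arg_cong[OF vanish[of x], where f = c0] br_emb1_emb1[of "c1 c" x]
    by (simp add: c[symmetric]) (simp add: cochain_defs)
  then have "g (c1 c) = g 0" by auto
  then have "c1 c = 0" using nondegenerate by (simp add: inj_eq)
  then show ?thesis using c by simp
next
  case False
  then have n: "2 \<le> n" using assms by simp
  have "cr c n xs = 0" for xs
  proof (cases "length xs = n - 1")
    case False
    then show ?thesis using homog_is_Cop[OF n \<open>H n c\<close>] unfolding is_Cop_def by simp
  next
    case True
    then obtain x ys where xs: "xs = x # ys" using n by (cases xs) auto
    have ins: "ins n x c = czero" using br_emb1_eq_ins[OF n \<open>H n c\<close>] vanish by metis
    show ?thesis
    proof (cases "n = 2")
      case True
      from arg_cong[OF ins, where f = c1] True have "cr c 2 [x] = 0"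
        unfolding ins_def by (simp add: cochain_defs)
      then show ?thesis using True xs \<open>length xs = n - 1\<close> by simp
    next
      case False
      from arg_cong[OF ins, where f = "\<lambda>c. cr c (n - 1) ys"] False xs \<open>length xs = n - 1\<close>
      show ?thesis unfolding ins_def by (simp add: cochain_defs split: if_splits)
    qed
  qed
  then have "cr c n = (\<lambda>_. 0)" by auto
  then show ?thesis using homog_eq_embr[OF n \<open>H n c\<close>] by (simp add: cochain_defs)
qed

lemma eq_if_insertions_eq:
  assumes "1 \<le> n" "H n c" "H n d" and "\<And>x. br c (emb1 x) = br d (emb1 x)"
  shows "c = d"
proof -
  have "cadd c (cneg d) = czero"
  proof (rule eq_czero_if_insertions_vanish)
    show "H n (cadd c (cneg d))" using assms by simp
    show "br (cadd c (cneg d)) (emb1 x) = czero" for x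
      using assms(4)[of x] homog_imp_C[OF assms(2)] homog_imp_C[OF assms(3)]
      by (simp add: br_cadd_left bracket.op_cneg_left cadd_cneg_eq_czero_iff)
  qed (fact \<open>1 \<le> n\<close>)
  then show ?thesis by (simp add: cadd_cneg_eq_czero_iff)
qed

end

section \<open>Derivation defects\<close>

definition derivation_defect ::
  "(('a::ab_group_add, 'e::ab_group_add) cochain \<Rightarrow> ('a, 'e) cochain \<Rightarrow> ('a, 'e) cochain) \<Rightarrow>
   (('a, 'e) cochain \<Rightarrow> ('a, 'e) cochain \<Rightarrow> ('a, 'e) cochain) \<Rightarrow>
   nat \<Rightarrow> nat \<Rightarrow> ('a, 'e) cochain \<Rightarrow> ('a, 'e) cochain \<Rightarrow> ('a, 'e) cochain \<Rightarrow> ('a, 'e) cochain"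
  where "derivation_defect br op r s p q u =
    cadd (br p (op q u)) (cneg (cadd (op (br p q) u) (csign (r * s) (op q (br p u)))))"

lemma derivation_defect_eq_czero_iff:
  "derivation_defect br op r s p q u = czero \<longleftrightarrow>
    br p (op q u) = cadd (op (br p q) u) (csign (r * s) (op q (br p u)))"
  by (simp add: derivation_defect_def cadd_cneg_eq_czero_iff)

text \<open>The bracket (\<open>\<delta> = 2\<close>) and the product (\<open>\<delta> = 0\<close>) are both of this kind: inserting an
  element of \<open>E\<close> is a graded derivation of \<open>op\<close>. This alone makes derivation defects with
  respect to \<open>op\<close> behave well under insertion.\<close>
locale graded_operation = cochain_bracket \<iota> smul g br + graded_bilinear \<iota> smul g op \<delta>
  for \<iota> :: "'r::comm_ring_1 \<Rightarrow> 'a::comm_ring_1" and smul :: "'a \<Rightarrow> 'e::ab_group_add \<Rightarrow> 'e"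
    and g br op \<delta> +
  assumes even_degree: "even \<delta>"
    and br_op_emb1: "H s c \<Longrightarrow> H t d \<Longrightarrow>
      br (op c d) (emb1 x) = cadd (csign t (op (br c (emb1 x)) d)) (op c (br d (emb1 x)))"
begin

lemma derivation_defect_czero:
  assumes "H r p" "H s q" "H t u"
  shows "derivation_defect br op r' s' czero q u = czero"
    and "derivation_defect br op r' s' p czero u = czero"
    and "derivation_defect br op r' s' p q czero = czero"
  using assms homog_op[OF assms(2,3), THEN homog_imp_C]
    homog_br[OF assms(1,2), THEN homog_imp_C] homog_br[OF assms(1,3), THEN homog_imp_C]
  by (simp_all add: derivation_defect_def homog_imp_C)

lemma derivation_defect_eq_czero_if_deg_less:
  assumes hp: "H r p" and hq: "H s q" and hu: "H t u" and deg: "r + s + t < \<delta> + 2"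
  shows "derivation_defect br op r s p q u = czero"
proof -
  note C = homog_imp_C[OF hp] homog_imp_C[OF hq] homog_imp_C[OF hu]
  have "br p (op q u) = czero"
  proof (cases "s + t < \<delta>")
    case False
    then show ?thesis using br_eq_czero_if_deg_less[OF hp homog_op[OF hq hu]] deg by simp
  qed (simp add: op_eq_czero_if_deg_less[OF hq hu] C)
  moreover have "op (br p q) u = czero"
  proof (cases "r + s < 2")
    case False
    then show ?thesis using op_eq_czero_if_deg_less[OF homog_br[OF hp hq] hu] deg by simp
  qed (simp add: br_eq_czero_if_deg_less[OF hp hq] C)
  moreover have "op q (br p u) = czero"
  proof (cases "r + t < 2")
    case False
    then show ?thesis using op_eq_czero_if_deg_less[OF hq homog_br[OF hp hu]] deg by simp
  qed (simp add: br_eq_czero_if_deg_less[OF hp hu] C)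
  ultimately show ?thesis by (simp add: derivation_defect_def)
qed

lemma homog_derivation_defect:
  assumes hp: "H r p" and hq: "H s q" and hu: "H t u"
  shows "H (r + s + t - \<delta> - 2) (derivation_defect br op r s p q u)"
proof -
  note C = homog_imp_C[OF hp] homog_imp_C[OF hq] homog_imp_C[OF hu]
  have "H (r + s + t - \<delta> - 2) (br p (op q u))"
  proof (cases "s + t < \<delta>")
    case False
    then show ?thesis using homog_br[OF hp homog_op[OF hq hu]] by (simp add: algebra_simps)
  qed (simp add: op_eq_czero_if_deg_less[OF hq hu] C)
  moreover have "H (r + s + t - \<delta> - 2) (op (br p q) u)"
  proof (cases "r + s < 2")
    case False
    then show ?thesis using homog_op[OF homog_br[OF hp hq] hu] by (simp add: algebra_simps)
  qed (simp add: br_eq_czero_if_deg_less[OF hp hq] C)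
  moreover have "H (r + s + t - \<delta> - 2) (op q (br p u))"
  proof (cases "r + t < 2")
    case False
    then show ?thesis using homog_op[OF hq homog_br[OF hp hu]] by (simp add: algebra_simps)
  qed (simp add: br_eq_czero_if_deg_less[OF hp hu] C)
  ultimately show ?thesis by (simp add: derivation_defect_def)
qed

lemma br_br_op_emb1:
  assumes hp: "H r p" and hq: "H s q" and hu: "H t u"
  shows "br (br p (op q u)) (emb1 x) =
    cadd (csign (s + t) (br (br p (emb1 x)) (op q u)))
      (cadd (csign t (br p (op (br q (emb1 x)) u))) (br p (op q (br u (emb1 x)))))"
proof -
  have hop: "H (s + t - \<delta>) (op q u)" by (rule homog_op[OF hq hu])
  have "br (br p (op q u)) (emb1 x) =
      cadd (csign (s + t - \<delta>) (br (br p (emb1 x)) (op q u))) (br p (br (op q u) (emb1 x)))"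
    by (rule br_br_emb1[OF hp hop])
  also have "csign (s + t - \<delta>) (br (br p (emb1 x)) (op q u)) = csign (s + t) (br (br p (emb1 x)) (op q u))"
    using op_eq_czero_if_deg_less[OF hq hu] homog_br_emb1[OF hp, THEN homog_imp_C]
    by (intro csign_diff_even even_degree) simp
  also have "br (op q u) (emb1 x) = cadd (csign t (op (br q (emb1 x)) u)) (op q (br u (emb1 x)))"
    by (rule br_op_emb1[OF hq hu])
  finally show ?thesis
    using hp hq hu by (simp add: br_cadd_right bracket.op_csign_right homog_imp_C)
qed

lemma br_op_br_left_emb1:
  assumes hp: "H r p" and hq: "H s q" and hu: "H t u"
  shows "br (op (br p q) u) (emb1 x) =
    cadd (csign t (cadd (csign s (op (br (br p (emb1 x)) q) u)) (op (br p (br q (emb1 x))) u)))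
      (op (br p q) (br u (emb1 x)))"
  using br_op_emb1[OF homog_br[OF hp hq] hu] br_br_emb1[OF hp hq] hp hq hu
  by (simp add: op_cadd_left op_csign_left homog_imp_C)

lemma br_op_br_right_emb1:
  assumes hp: "H r p" and hq: "H s q" and hu: "H t u"
  shows "br (op q (br p u)) (emb1 x) =
    cadd (csign (r + t) (op (br q (emb1 x)) (br p u)))
      (cadd (csign t (op q (br (br p (emb1 x)) u))) (op q (br p (br u (emb1 x)))))"
proof -
  have "br (op q (br p u)) (emb1 x) =
      cadd (csign (r + t - 2) (op (br q (emb1 x)) (br p u))) (op q (br (br p u) (emb1 x)))"
    by (rule br_op_emb1[OF hq homog_br[OF hp hu]])
  also have "csign (r + t - 2) (op (br q (emb1 x)) (br p u)) = csign (r + t) (op (br q (emb1 x)) (br p u))"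
    using br_eq_czero_if_deg_less[OF hp hu] homog_br_emb1[OF hq, THEN homog_imp_C]
    by (intro csign_diff_even) simp_all
  finally show ?thesis
    using br_br_emb1[OF hp hu] hp hq hu by (simp add: op_cadd_right op_csign_right homog_imp_C)
qed

lemma br_derivation_defect_emb1:
  assumes hp: "H r p" and hq: "H s q" and hu: "H t u"
  shows "br (derivation_defect br op r s p q u) (emb1 x) =
    cadd (csign (s + t) (derivation_defect br op (r - 1) s (br p (emb1 x)) q u))
      (cadd (csign t (derivation_defect br op r (s - 1) p (br q (emb1 x)) u))
        (derivation_defect br op r s p q (br u (emb1 x))))"
proof -
  have pred_r: "derivation_defect br op (r - 1) s (br p (emb1 x)) q u =
      derivation_defect br op (r + 1) s (br p (emb1 x)) q u"
  proof (cases "r = 0")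
    case True
    then show ?thesis using br_emb1_eq_czero_if_deg0 hp derivation_defect_czero(1)[OF hp hq hu] by simp
  next
    case False
    then show ?thesis by (simp only: derivation_defect_def csign_pred_mult[OF False])
  qed
  have pred_s: "derivation_defect br op r (s - 1) p (br q (emb1 x)) u =
      derivation_defect br op r (s + 1) p (br q (emb1 x)) u"
  proof (cases "s = 0")
    case True
    then show ?thesis using br_emb1_eq_czero_if_deg0 hq derivation_defect_czero(2)[OF hp hq hu] by simp
  next
    case False
    then show ?thesis by (simp only: derivation_defect_def csign_pred_mult[OF False])
  qed
  note C = homog_imp_C[OF hp] homog_imp_C[OF hq] homog_imp_C[OF hu]
  show ?thesis
    unfolding pred_r pred_s unfolding derivation_defect_def
    by (simp add: br_cadd_left bracket.op_cneg_left bracket.op_csign_left C br_br_op_emb1[OF hp hq hu]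
        br_op_br_left_emb1[OF hp hq hu] br_op_br_right_emb1[OF hp hq hu])
      (rule cochain_eqI; cases "even r"; cases "even s"; cases "even t"; simp add: cochain_defs algebra_simps)
qed

lemma derivation_defect_eq_czero_by_insertion:
  assumes hp: "H r p" and hq: "H s q" and hu: "H t u" and deg: "\<delta> + 3 \<le> r + s + t"
    and IH: "\<And>r' s' t' p' q' u'. r' + s' + t' < r + s + t \<Longrightarrow> H r' p' \<Longrightarrow> H s' q' \<Longrightarrow> H t' u' \<Longrightarrow>
      derivation_defect br op r' s' p' q' u' = czero"
  shows "derivation_defect br op r s p q u = czero"
proof (rule eq_czero_if_insertions_vanish)
  show "1 \<le> r + s + t - \<delta> - 2" using deg by simp
  show "H (r + s + t - \<delta> - 2) (derivation_defect br op r s p q u)"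
    by (rule homog_derivation_defect[OF hp hq hu])
  fix x
  note hp' = homog_br_emb1[OF hp, of x] and hq' = homog_br_emb1[OF hq, of x]
    and hu' = homog_br_emb1[OF hu, of x]
  have "derivation_defect br op (r - 1) s (br p (emb1 x)) q u = czero"
    using IH[OF _ hp' hq hu] derivation_defect_czero(1)[OF hp hq hu] br_emb1_eq_czero_if_deg0 hp
    by (cases "r = 0") simp_all
  moreover have "derivation_defect br op r (s - 1) p (br q (emb1 x)) u = czero"
    using IH[OF _ hp hq' hu] derivation_defect_czero(2)[OF hp hq hu] br_emb1_eq_czero_if_deg0 hq
    by (cases "s = 0") simp_all
  moreover have "derivation_defect br op r s p q (br u (emb1 x)) = czero"
    using IH[OF _ hp hq hu'] derivation_defect_czero(3)[OF hp hq hu] br_emb1_eq_czero_if_deg0 hu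
    by (cases "t = 0") simp_all
  ultimately show "br (derivation_defect br op r s p q u) (emb1 x) = czero"
    by (simp add: br_derivation_defect_emb1[OF hp hq hu])
qed

end

section \<open>Symbols and the Jacobi identity\<close>

lemma full_form_additive_eqI:
  fixes f f' :: "'a::comm_ring_1 \<Rightarrow> 'b::ab_group_add"
  assumes "full_form g"
    and "\<And>a b. f (a + b) = f a + f b" and "\<And>a b. f' (a + b) = f' a + f' b"
    and "\<And>u w. f (g u w) = f' (g u w)"
  shows "f = f'"
proof
  fix a
  obtain ps where a: "a = sum_list (map (\<lambda>(x, y). g x y) ps)"
    using \<open>full_form g\<close> unfolding full_form_def by blast
  have "f 0 = 0" "f' 0 = 0"
    using assms(2)[of 0 0] assms(3)[of 0 0] by simp_all
  then show "f a = f' a"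
    unfolding a by (induction ps) (auto simp: assms(2-4))
qed

context cochain_bracket
begin

interpretation bracket: graded_operation \<iota> smul g br br 2
  by unfold_locales (simp_all add: br_br_emb1)

text \<open>On \<open>C\<^sup>2(E)\<close> this is the symbol \<open>\<sigma>\<^sub>c\<close>, recovered from the bracket with \<open>A\<close>.\<close>
definition symbol :: "('a, 'e) cochain \<Rightarrow> 'a \<Rightarrow> 'a"
  where "symbol c a = c0 (br c (emb0 a))"

lemma
  assumes "H 2 c"
  shows homog2_br_emb0: "br c (emb0 a) = emb0 (symbol c a)"
    and symbol_g: "symbol c (g u w) = g (cr c 2 [u]) w + g u (cr c 2 [w])"
    and is_derivation_symbol: "is_derivation \<iota> (symbol c)"
proof -
  have Cop: "is_Cop \<iota> smul g 2 (cr c 2)" using homog_is_Cop assms by simp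
  then obtain \<sigma> where \<sigma>: "is_symbol \<iota> smul g 2 (cr c 2) \<sigma>" unfolding is_Cop_def by blast
  have br: "br c (emb0 a) = emb0 (\<sigma> [] a)" for a
    using br_embr2_emb0[OF Cop \<sigma>] homog_eq_embr[OF _ assms] by simp
  then have "symbol c = \<sigma> []" by (simp add: symbol_def emb0_def fun_eq_iff)
  then show "br c (emb0 a) = emb0 (symbol c a)"
    and "symbol c (g u w) = g (cr c 2 [u]) w + g u (cr c 2 [w])"
    and "is_derivation \<iota> (symbol c)"
    using br \<sigma> unfolding is_symbol_def by simp_all
qed

lemma homog2_emb0_br: "H 2 c \<Longrightarrow> br (emb0 a) c = cneg (emb0 (symbol c a))"
  using br_skew[OF homog_emb0 _, of 2 c a] by (simp add: homog2_br_emb0 csign_def)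

lemma homog2_br_emb1: "H 2 c \<Longrightarrow> br c (emb1 y) = emb1 (cr c 2 [y])"
  using br_emb1_eq_ins[of 2 c y] by (simp add: ins_def)

lemma homog2_emb1_br: "H 2 c \<Longrightarrow> br (emb1 y) c = cneg (emb1 (cr c 2 [y]))"
  using br_skew[OF homog_emb1 _, of 2 c y] by (simp add: homog2_br_emb1 csign_def)

lemma symbol_additive: "H 2 c \<Longrightarrow> symbol c (a + b) = symbol c a + symbol c b"
  using is_derivation_symbol derivation_add by blast

lemma symbol_br:
  assumes hp: "H 2 p" and hq: "H 2 q"
  shows "symbol (br p q) a = symbol p (symbol q a) - symbol q (symbol p a)"
proof -
  have hpq: "H 2 (br p q)" using homog_br[OF hp hq] by simp
  have insertion: "cr (br p q) 2 [y] = cr p 2 [cr q 2 [y]] - cr q 2 [cr p 2 [y]]" for y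
  proof -
    have "emb1 (cr (br p q) 2 [y]) = cadd (csign 2 (br (br p (emb1 y)) q)) (br p (br q (emb1 y)))"
      using br_br_emb1[OF hp hq] homog2_br_emb1[OF hpq] by simp
    also have "\<dots> = emb1 (cr p 2 [cr q 2 [y]] - cr q 2 [cr p 2 [y]])"
      using hp hq by (simp add: homog2_br_emb1 homog2_emb1_br csign_def)
        (rule cochain_eqI; simp add: cochain_defs)
    finally show ?thesis by (simp add: emb1_def)
  qed
  have "symbol (br p q) = (\<lambda>a. symbol p (symbol q a) - symbol q (symbol p a))"
  proof (rule full_form_additive_eqI[OF full])
    show "symbol (br p q) (g u w) = symbol p (symbol q (g u w)) - symbol q (symbol p (g u w))" for u w
      using hp hq hpq
      by (simp add: symbol_g symbol_additive insertion g_diff_left g_diff_right algebra_simps)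
  qed (simp_all add: symbol_additive hp hq hpq)
  then show ?thesis by simp
qed

lemma jacobi_emb1_right:
  assumes hp: "H r p" and hq: "H s q"
  shows "br p (br q (emb1 x)) = cadd (br (br p q) (emb1 x)) (csign (r * s) (br q (br p (emb1 x))))"
proof -
  have skew: "br (br p (emb1 x)) q = cneg (csign ((r + 1) * s) (br q (br p (emb1 x))))"
  proof (cases "r = 0")
    case True
    then show ?thesis using br_emb1_eq_czero_if_deg0 hp hq by (simp add: homog_imp_C)
  next
    case False
    then show ?thesis
      using br_skew[OF homog_br_emb1[OF hp] hq] by (simp only: csign_pred_mult[OF False])
  qed
  show ?thesis
    using hp hq by (simp add: br_br_emb1[OF hp hq] skew)
      (rule cochain_eqI; cases "even r"; cases "even s"; simp add: cochain_defs algebra_simps)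
qed

lemma jacobi_emb1_left:
  assumes hq: "H s q" and hu: "H t u"
  shows "br (emb1 x) (br q u) = cadd (br (br (emb1 x) q) u) (csign s (br q (br (emb1 x) u)))"
proof -
  have "br (emb1 x) (br q u) = cneg (csign (s + t - 2) (br (br q u) (emb1 x)))"
    using br_skew[OF homog_emb1 homog_br[OF hq hu]] by simp
  also have "csign (s + t - 2) (br (br q u) (emb1 x)) = csign (s + t) (br (br q u) (emb1 x))"
    using br_eq_czero_if_deg_less[OF hq hu] by (intro csign_diff_even) simp_all
  finally show ?thesis
    using br_skew[OF homog_emb1 hq] br_skew[OF homog_emb1 hu] hq hu
    by (simp add: br_br_emb1[OF hq hu] bracket.op_cneg_left bracket.op_cneg_right
        bracket.op_csign_left bracket.op_csign_right homog_imp_C)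
      (rule cochain_eqI; cases "even s"; cases "even t"; simp add: cochain_defs algebra_simps)
qed

lemma jacobi_emb1_middle:
  assumes hp: "H r p" and hu: "H t u"
  shows "br p (br (emb1 x) u) = cadd (br (br p (emb1 x)) u) (csign r (br (emb1 x) (br p u)))"
proof -
  have "br (emb1 x) (br p u) = cneg (csign (r + t - 2) (br (br p u) (emb1 x)))"
    using br_skew[OF homog_emb1 homog_br[OF hp hu]] by simp
  also have "csign (r + t - 2) (br (br p u) (emb1 x)) = csign (r + t) (br (br p u) (emb1 x))"
    using br_eq_czero_if_deg_less[OF hp hu] by (intro csign_diff_even) simp_all
  finally show ?thesis
    using br_skew[OF homog_emb1 hu] hp hu
    by (simp add: br_br_emb1[OF hp hu] bracket.op_cneg_left bracket.op_cneg_right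
        bracket.op_csign_left bracket.op_csign_right homog_imp_C)
      (rule cochain_eqI; cases "even r"; cases "even t"; simp add: cochain_defs algebra_simps)
qed

lemma jacobi_homog2_homog2_emb0:
  assumes hp: "H 2 p" and hq: "H 2 q"
  shows "derivation_defect br br 2 2 p q (emb0 a) = czero"
    and "derivation_defect br br 2 0 p (emb0 a) q = czero"
    and "derivation_defect br br 0 2 (emb0 a) p q = czero"
proof -
  have hpq: "H 2 (br p q)" using homog_br[OF hp hq] by simp
  note brs = homog2_br_emb0[OF hp] homog2_br_emb0[OF hq] homog2_br_emb0[OF hpq]
    homog2_emb0_br[OF hp] homog2_emb0_br[OF hq] homog2_emb0_br[OF hpq]
  have minus: "symbol p (- b) = - symbol p b" "symbol q (- b) = - symbol q b" for b
    using derivation_minus is_derivation_symbol hp hq by blast+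
  note simps = derivation_defect_eq_czero_iff brs bracket.op_cneg_left bracket.op_cneg_right
    homog_imp_C[OF hp] homog_imp_C[OF hq] symbol_br[OF hp hq] minus csign_def
  show "derivation_defect br br 2 2 p q (emb0 a) = czero"
    by (simp add: simps) (rule cochain_eqI; simp add: cochain_defs)
  show "derivation_defect br br 2 0 p (emb0 a) q = czero"
    by (simp add: simps) (rule cochain_eqI; simp add: cochain_defs)
  show "derivation_defect br br 0 2 (emb0 a) p q = czero"
    by (simp add: simps) (rule cochain_eqI; simp add: cochain_defs)
qed

context
  fixes c \<sigma>
  assumes hc: "H 4 c" and \<sigma>: "is_symbol \<iota> smul g 4 (cr c 4) \<sigma>"
begin

lemma symbol4_derivation: "is_derivation \<iota> (\<sigma> [x, y])"
proof -
  from \<sigma> have "\<forall>xs. length xs = 4 - 2 \<longrightarrow> is_derivation \<iota> (\<sigma> xs)"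
    unfolding is_symbol_def by (elim conjE) assumption
  then show ?thesis by (simp add: numeral_eq_Suc)
qed

lemma symbol4_g: "\<sigma> [x, y] (g u w) = g (cr c 4 [x, y, u]) w + g u (cr c 4 [x, y, w])"
proof -
  from \<sigma> have "\<forall>xs u w. length xs = 4 - 2 \<longrightarrow>
      \<sigma> xs (g u w) = g (cr c 4 (xs @ [u])) w + g u (cr c 4 (xs @ [w]))"
    unfolding is_symbol_def by (elim conjE) assumption
  then show ?thesis by (simp add: numeral_eq_Suc)
qed

lemma symbol4_exchange: "g (cr c 4 [p, q, w] + cr c 4 [q, p, w]) u = \<sigma> [w, u] (g p q)"
proof -
  from \<sigma> have "\<forall>xs u i. length xs = 4 - 1 \<longrightarrow> i < 4 - 2 \<longrightarrow>
      g (cr c 4 xs + cr c 4 (xs[i := xs ! (i + 1), i + 1 := xs ! i])) u =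
      \<sigma> (take i xs @ drop (i + 2) xs @ [u]) (g (xs ! i) (xs ! (i + 1)))"
    unfolding is_symbol_def by (elim conjE) simp
  from this[rule_format, of "[p, q, w]" 0 u] show ?thesis by (simp add: numeral_eq_Suc)
qed

lemma symbol_br_br_emb1: "symbol (br (br c (emb1 x)) (emb1 y)) = \<sigma> [x, y]"
proof -
  have hc': "H 3 (br c (emb1 x))" using homog_br_emb1[OF hc, of x] by simp
  have hc'': "H 2 (br (br c (emb1 x)) (emb1 y))" using homog_br_emb1[OF hc', of y] by simp
  have "br (br c (emb1 x)) (emb1 y) = ins 3 y (ins 4 x c)"
    using br_emb1_eq_ins[OF _ hc, of x] br_emb1_eq_ins[OF _ hc', of y] by simp
  then have ins: "cr (br (br c (emb1 x)) (emb1 y)) 2 [u] = cr c 4 [x, y, u]" for u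
    by (simp add: ins_def cochain_defs)
  show ?thesis
    using symbol_additive[OF hc''] derivation_add[OF symbol4_derivation]
    by (intro full_form_additive_eqI[OF full]) (simp_all add: symbol_g[OF hc''] ins symbol4_g)
qed

lemma g_br_emb0_emb1: "g (cr (br c (emb0 a)) 2 [x]) y = \<sigma> [x, y] a"
proof -
  have hca: "H 2 (br c (emb0 a))" using homog_br[OF hc homog_emb0, of a] by simp
  have hc': "H 3 (br c (emb1 x))" using homog_br_emb1[OF hc, of x] by simp
  have hc'': "H 2 (br (br c (emb1 x)) (emb1 y))" using homog_br_emb1[OF hc', of y] by simp
  text \<open>Brackets with \<open>emb1 x\<close> and \<open>emb1 y\<close> commute with the one with \<open>emb0 a\<close>,
    since \<open>[a, x] = 0\<close>.\<close>
  have "emb1 (cr (br c (emb0 a)) 2 [x]) = br (br c (emb0 a)) (emb1 x)"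
    using homog2_br_emb1[OF hca] by simp
  also have "\<dots> = br (br c (emb1 x)) (emb0 a)"
    using br_br_emb1[OF hc homog_emb0, of a x] hc by (simp add: br_emb0_emb1 csign_def homog_imp_C)
  finally have "emb0 (g (cr (br c (emb0 a)) 2 [x]) y) = br (br (br c (emb1 x)) (emb0 a)) (emb1 y)"
    by (simp flip: br_emb1_emb1)
  also have "\<dots> = br (br (br c (emb1 x)) (emb1 y)) (emb0 a)"
    using br_br_emb1[OF hc' homog_emb0, of a y] hc' by (simp add: br_emb0_emb1 csign_def homog_imp_C)
  also have "\<dots> = emb0 (\<sigma> [x, y] a)"
    using homog2_br_emb0[OF hc''] by (simp add: symbol_br_br_emb1)
  finally show ?thesis by (simp add: emb0_def)
qed

lemma symbol_br_emb0_g: "symbol (br c (emb0 a)) (g u w) = \<sigma> [u, w] a + \<sigma> [w, u] a"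
proof -
  have "H 2 (br c (emb0 a))" using homog_br[OF hc homog_emb0, of a] by simp
  then show ?thesis
    using g_commute[of u "cr (br c (emb0 a)) 2 [w]"] by (simp add: symbol_g g_br_emb0_emb1)
qed

lemma symbol4_swap:
  "\<sigma> [u, w] (g p q) + \<sigma> [w, u] (g p q) = \<sigma> [p, q] (g u w) + \<sigma> [q, p] (g u w)"
  using symbol4_exchange[of p q u w, symmetric] symbol4_exchange[of p q w u, symmetric]
    g_commute[of u "cr c 4 [p, q, w]"] g_commute[of u "cr c 4 [q, p, w]"]
  by (simp add: symbol4_g g_add_left)

end

lemma symbol_cadd: "H 2 c \<Longrightarrow> H 2 d \<Longrightarrow> symbol (cadd c d) a = symbol c a + symbol d a"
  by (simp add: symbol_def br_cadd_left homog_imp_C, simp add: cadd_def)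

lemma symbol_br_emb0_commute:
  assumes hc: "H 4 c"
  shows "symbol (br c (emb0 a)) b = symbol (br c (emb0 b)) a"
proof -
  obtain \<sigma> where \<sigma>: "is_symbol \<iota> smul g 4 (cr c 4) \<sigma>"
    using homog_is_Cop[OF _ hc] unfolding is_Cop_def by auto
  have hca: "H 2 (br c (emb0 a))" for a using homog_br[OF hc homog_emb0, of a] by simp
  have additive: "symbol (br c (emb0 (a + a'))) b = symbol (br c (emb0 a)) b + symbol (br c (emb0 a')) b"
    for a a' b
    using hc hca by (simp add: emb0_add br_cadd_right homog_imp_C symbol_cadd)
  have "(\<lambda>a. \<sigma> [u, w] a + \<sigma> [w, u] a) = symbol (br c (emb0 (g u w)))" for u w
    using derivation_add[OF symbol4_derivation[OF hc \<sigma>]] symbol_additive[OF hca]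
    by (intro full_form_additive_eqI[OF full])
      (simp_all add: symbol4_swap[OF hc \<sigma>, of u w] symbol_br_emb0_g[OF hc \<sigma>])
  then have "symbol (br c (emb0 a)) = (\<lambda>b. symbol (br c (emb0 b)) a)"
    using symbol_additive[OF hca] additive
    by (intro full_form_additive_eqI[OF full]) (simp_all add: symbol_br_emb0_g[OF hc \<sigma>] fun_eq_iff)
  then show ?thesis by simp
qed

lemma jacobi_homog4_emb0_emb0:
  assumes hc: "H 4 c"
  shows "derivation_defect br br 4 0 c (emb0 a) (emb0 b) = czero"
    and "derivation_defect br br 0 4 (emb0 a) c (emb0 b) = czero"
    and "derivation_defect br br 0 0 (emb0 a) (emb0 b) c = czero"
proof -
  have hca: "H 2 (br c (emb0 a))" for a using homog_br[OF hc homog_emb0, of a] by simp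
  have skew: "br (emb0 a) c = cneg (br c (emb0 a))" for a
    using br_skew[OF homog_emb0 hc, of a] by (simp add: csign_def)
  note simps = derivation_defect_eq_czero_iff homog2_br_emb0[OF hca] homog2_emb0_br[OF hca]
    symbol_br_emb0_commute[OF hc, of a b] br_emb0_emb0 skew bracket.op_cneg_left bracket.op_cneg_right
    homog_imp_C[OF hc] homog_imp_C[OF hca]
  show "derivation_defect br br 4 0 c (emb0 a) (emb0 b) = czero"
    by (simp add: simps csign_def) (rule cochain_eqI; simp add: cochain_defs)
  show "derivation_defect br br 0 4 (emb0 a) c (emb0 b) = czero"
    by (simp add: simps)
  show "derivation_defect br br 0 0 (emb0 a) (emb0 b) c = czero"
    by (simp add: simps) (rule cochain_eqI; simp add: cochain_defs)
qed

lemma jacobi_total_degree_4: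
  assumes hp: "H r p" and hq: "H s q" and hu: "H t u" and deg: "r + s + t = 4"
  shows "derivation_defect br br r s p q u = czero"
proof -
  have emb0: "\<exists>a. c = emb0 a" if "H 0 c" for c using homog_0_eq_emb0[OF that] by blast
  have emb1: "\<exists>x. c = emb1 x" if "H 1 c" for c using homog_1_eq_emb1[OF that] by blast
  consider "r = 1" | "s = 1" | "t = 1" | "r = 2" "s = 2" "t = 0" | "r = 2" "s = 0" "t = 2"
    | "r = 0" "s = 2" "t = 2" | "r = 4" "s = 0" "t = 0" | "r = 0" "s = 4" "t = 0"
    | "r = 0" "s = 0" "t = 4"
    using deg by atomize_elim presburger
  then show ?thesis
  proof cases
    case 1
    with emb1 hp obtain x where "p = emb1 x" by blast
    then show ?thesis using jacobi_emb1_left[OF hq hu] 1 by (simp add: derivation_defect_eq_czero_iff)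
  next
    case 2
    with emb1 hq obtain x where "q = emb1 x" by blast
    then show ?thesis using jacobi_emb1_middle[OF hp hu] 2 by (simp add: derivation_defect_eq_czero_iff)
  next
    case 3
    with emb1 hu obtain x where "u = emb1 x" by blast
    then show ?thesis using jacobi_emb1_right[OF hp hq] by (simp add: derivation_defect_eq_czero_iff)
  next
    case 4
    with emb0 hu obtain a where "u = emb0 a" by blast
    then show ?thesis using jacobi_homog2_homog2_emb0(1) hp hq 4 by simp
  next
    case 5
    with emb0 hq obtain a where "q = emb0 a" by blast
    then show ?thesis using jacobi_homog2_homog2_emb0(2) hp hu 5 by simp
  next
    case 6
    with emb0 hp obtain a where "p = emb0 a" by blast
    then show ?thesis using jacobi_homog2_homog2_emb0(3) hq hu 6 by simp
  next
    case 7
    with emb0 hq hu obtain a b where "q = emb0 a" "u = emb0 b" by blast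
    then show ?thesis using jacobi_homog4_emb0_emb0(1) hp 7 by simp
  next
    case 8
    with emb0 hp hu obtain a b where "p = emb0 a" "u = emb0 b" by blast
    then show ?thesis using jacobi_homog4_emb0_emb0(2) hq 8 by simp
  next
    case 9
    with emb0 hp hq obtain a b where "p = emb0 a" "q = emb0 b" by blast
    then show ?thesis using jacobi_homog4_emb0_emb0(3) hu 9 by simp
  qed
qed

theorem jacobi:
  assumes "H r p" "H s q" "H t u"
  shows "br p (br q u) = cadd (br (br p q) u) (csign (r * s) (br q (br p u)))"
proof -
  have "derivation_defect br br r s p q u = czero"
    using assms
  proof (induction "r + s + t" arbitrary: r s t p q u rule: less_induct)
    case less
    consider "r + s + t < 4" | "r + s + t = 4" | "5 \<le> r + s + t" by arith
    then show ?case
    proof cases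
      case 1
      then show ?thesis by (intro bracket.derivation_defect_eq_czero_if_deg_less[OF less.prems]) simp
    next
      case 2
      then show ?thesis by (rule jacobi_total_degree_4[OF less.prems])
    next
      case 3
      then show ?thesis
        by (intro bracket.derivation_defect_eq_czero_by_insertion[OF less.prems]) (simp_all add: less.hyps)
    qed
  qed
  then show ?thesis by (simp add: derivation_defect_eq_czero_iff)
qed

end

section \<open>The product\<close>

locale cochain_poisson = cochain_bracket \<iota> smul g br
  for \<iota> :: "'r::comm_ring_1 \<Rightarrow> 'a::comm_ring_1" and smul :: "'a \<Rightarrow> 'e::ab_group_add \<Rightarrow> 'e" and g br +
  fixes wd :: "('a, 'e) cochain \<Rightarrow> ('a, 'e) cochain \<Rightarrow> ('a, 'e) cochain"
  assumes wedge: "is_wedge \<iota> smul g br wd"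
begin

interpretation M: module smul by (rule module)

lemma wd_cadd_left: "C c \<Longrightarrow> C c' \<Longrightarrow> C d \<Longrightarrow> wd (cadd c c') d = cadd (wd c d) (wd c' d)"
  using wedge unfolding is_wedge_def by (elim conjE) metis

lemma wd_cadd_right: "C c \<Longrightarrow> C c' \<Longrightarrow> C d \<Longrightarrow> wd d (cadd c c') = cadd (wd d c) (wd d c')"
  using wedge unfolding is_wedge_def by (elim conjE) metis

lemma wd_cscale_left: "C c \<Longrightarrow> C d \<Longrightarrow> wd (cscale \<iota> smul t c) d = cscale \<iota> smul t (wd c d)"
  using wedge unfolding is_wedge_def by (elim conjE) metis

lemma wd_cscale_right: "C c \<Longrightarrow> C d \<Longrightarrow> wd d (cscale \<iota> smul t c) = cscale \<iota> smul t (wd d c)"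
  using wedge unfolding is_wedge_def by (elim conjE) metis

lemma homog_wd: "H r c \<Longrightarrow> H s d \<Longrightarrow> H (r + s) (wd c d)"
  using wedge unfolding is_wedge_def by (elim conjE) metis

lemma wd_emb0_emb0: "wd (emb0 a) (emb0 b) = emb0 (a * b)"
  using wedge unfolding is_wedge_def by (elim conjE) metis

lemma wd_emb0_emb1: "wd (emb0 a) (emb1 x) = emb1 (smul a x)"
  using wedge unfolding is_wedge_def by (elim conjE) metis

lemma wd_emb1_emb0: "wd (emb1 x) (emb0 a) = emb1 (smul a x)"
  using wedge unfolding is_wedge_def by (elim conjE) metis

lemma br_wd_emb1: "H r c \<Longrightarrow> H s d \<Longrightarrow>
    br (wd c d) (emb1 x) = cadd (csign s (wd (br c (emb1 x)) d)) (wd c (br d (emb1 x)))"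
  using wedge unfolding is_wedge_def by (elim conjE) metis

interpretation product: graded_operation \<iota> smul g br wd 0
  by unfold_locales (simp_all add: wd_cadd_left wd_cadd_right wd_cscale_left wd_cscale_right
      homog_wd br_wd_emb1)

lemma wd_commute_deg_le_1:
  assumes hc: "H r c" and hd: "H s d" and deg: "r + s \<le> 1"
  shows "wd c d = csign (r * s) (wd d c)"
proof -
  consider "r = 0" "s = 0" | "r = 1" "s = 0" | "r = 0" "s = 1"
    using deg by atomize_elim arith
  then show ?thesis
  proof cases
    case 1
    then have "c = emb0 (c0 c)" "d = emb0 (c0 d)" using hc hd homog_0_eq_emb0 by simp_all
    then show ?thesis using 1 by (metis wd_emb0_emb0 mult.commute csign_def even_zero mult_0)
  next
    case 2
    then have "c = emb1 (c1 c)" "d = emb0 (c0 d)" using hc hd homog_0_eq_emb0 homog_1_eq_emb1 by simp_all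
    then show ?thesis using 2 by (metis wd_emb0_emb1 wd_emb1_emb0 csign_def even_zero mult_0_right)
  next
    case 3
    then have "c = emb0 (c0 c)" "d = emb1 (c1 d)" using hc hd homog_0_eq_emb0 homog_1_eq_emb1 by simp_all
    then show ?thesis using 3 by (metis wd_emb0_emb1 wd_emb1_emb0 csign_def even_zero mult_0)
  qed
qed

theorem wd_commute:
  assumes "H r c" "H s d"
  shows "wd c d = csign (r * s) (wd d c)"
  using assms
proof (induction "r + s" arbitrary: r s c d rule: less_induct)
  case less
  note hc = less.prems(1) and hd = less.prems(2)
  show ?case
  proof (cases "r + s \<le> 1")
    case True
    then show ?thesis by (rule wd_commute_deg_le_1[OF hc hd])
  next
    case False
    have left: "wd (br c (emb1 x)) d = csign ((r + 1) * s) (wd d (br c (emb1 x)))" for x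
    proof (cases "r = 0")
      case True
      then show ?thesis using br_emb1_eq_czero_if_deg0 hc hd by (simp add: homog_imp_C)
    next
      case False
      then have "wd (br c (emb1 x)) d = csign ((r - 1) * s) (wd d (br c (emb1 x)))"
        using less.hyps[OF _ homog_br_emb1[OF hc] hd] by simp
      then show ?thesis by (simp only: csign_pred_mult[OF False])
    qed
    have right: "wd c (br d (emb1 x)) = csign (r * (s + 1)) (wd (br d (emb1 x)) c)" for x
    proof (cases "s = 0")
      case True
      then show ?thesis using br_emb1_eq_czero_if_deg0 hc hd by (simp add: homog_imp_C)
    next
      case False
      then have "wd c (br d (emb1 x)) = csign (r * (s - 1)) (wd (br d (emb1 x)) c)"
        using less.hyps[OF _ hc homog_br_emb1[OF hd]] by simp
      then show ?thesis by (simp only: csign_pred_mult[OF False])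
    qed
    show ?thesis
    proof (rule eq_if_insertions_eq)
      show "1 \<le> r + s" using False by simp
      show "H (r + s) (wd c d)" by (rule homog_wd[OF hc hd])
      show "H (r + s) (csign (r * s) (wd d c))" using homog_wd[OF hd hc] by (simp add: add.commute)
      show "br (wd c d) (emb1 x) = br (csign (r * s) (wd d c)) (emb1 x)" for x
        using hc hd
        by (simp add: br_wd_emb1[OF hc hd] br_wd_emb1[OF hd hc] bracket.op_csign_left product.op_csign_left
            product.op_csign_right left right homog_imp_C)
          (rule cochain_eqI; cases "even r"; cases "even s"; simp add: cochain_defs algebra_simps)
    qed
  qed
qed

lemma wd_assoc_deg_le_1:
  assumes hp: "H r p" and hq: "H s q" and hu: "H t u" and deg: "r + s + t \<le> 1"
  shows "wd (wd p q) u = wd p (wd q u)"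
proof -
  consider "r = 0" "s = 0" "t = 0" | "r = 1" "s = 0" "t = 0" | "r = 0" "s = 1" "t = 0"
    | "r = 0" "s = 0" "t = 1"
    using deg by atomize_elim arith
  then show ?thesis
  proof cases
    case 1
    then have "p = emb0 (c0 p)" "q = emb0 (c0 q)" "u = emb0 (c0 u)"
      using hp hq hu homog_0_eq_emb0 by simp_all
    then show ?thesis by (metis wd_emb0_emb0 mult.assoc)
  next
    case 2
    then have "p = emb1 (c1 p)" "q = emb0 (c0 q)" "u = emb0 (c0 u)"
      using hp hq hu homog_0_eq_emb0 homog_1_eq_emb1 by simp_all
    then show ?thesis by (metis wd_emb0_emb0 wd_emb1_emb0 M.scale_scale mult.commute)
  next
    case 3
    then have "p = emb0 (c0 p)" "q = emb1 (c1 q)" "u = emb0 (c0 u)"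
      using hp hq hu homog_0_eq_emb0 homog_1_eq_emb1 by simp_all
    then show ?thesis by (metis wd_emb0_emb1 wd_emb1_emb0 M.scale_scale mult.commute)
  next
    case 4
    then have "p = emb0 (c0 p)" "q = emb0 (c0 q)" "u = emb1 (c1 u)"
      using hp hq hu homog_0_eq_emb0 homog_1_eq_emb1 by simp_all
    then show ?thesis by (metis wd_emb0_emb0 wd_emb0_emb1 M.scale_scale)
  qed
qed

lemma wd_assoc_homog:
  assumes "H r p" "H s q" "H t u"
  shows "wd (wd p q) u = wd p (wd q u)"
  using assms
proof (induction "r + s + t" arbitrary: r s t p q u rule: less_induct)
  case less
  note hp = less.prems(1) and hq = less.prems(2) and hu = less.prems(3)
  show ?case
  proof (cases "r + s + t \<le> 1")
    case True
    then show ?thesis by (rule wd_assoc_deg_le_1[OF hp hq hu])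
  next
    case False
    note C = homog_imp_C[OF hp] homog_imp_C[OF hq] homog_imp_C[OF hu]
    have smaller: "wd (wd p' q') u' = wd p' (wd q' u')"
      if "H r' p'" "H s' q'" "H t' u'" "r' + s' + t' < r + s + t \<or> p' = czero \<or> q' = czero \<or> u' = czero"
      for r' s' t' p' q' u'
      using that less.hyps[OF _ that(1-3)] by (auto simp: homog_imp_C)
    have "br p (emb1 x) = czero" if "r = 0" for x using br_emb1_eq_czero_if_deg0 hp that by simp
    moreover have "br q (emb1 x) = czero" if "s = 0" for x using br_emb1_eq_czero_if_deg0 hq that by simp
    moreover have "br u (emb1 x) = czero" if "t = 0" for x using br_emb1_eq_czero_if_deg0 hu that by simp
    ultimately have IH: "wd (wd (br p (emb1 x)) q) u = wd (br p (emb1 x)) (wd q u)"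
      "wd (wd p (br q (emb1 x))) u = wd p (wd (br q (emb1 x)) u)"
      "wd (wd p q) (br u (emb1 x)) = wd p (wd q (br u (emb1 x)))" for x
      by (auto intro!: smaller hp hq hu homog_br_emb1)
    show ?thesis
    proof (rule eq_if_insertions_eq)
      show "1 \<le> r + s + t" using False by simp
      show "H (r + s + t) (wd (wd p q) u)" using homog_wd[OF homog_wd[OF hp hq] hu] .
      show "H (r + s + t) (wd p (wd q u))" using homog_wd[OF hp homog_wd[OF hq hu]] by (simp add: add.assoc)
      show "br (wd (wd p q) u) (emb1 x) = br (wd p (wd q u)) (emb1 x)" for x
        by (simp add: br_wd_emb1[OF homog_wd[OF hp hq] hu] br_wd_emb1[OF hp hq]
            br_wd_emb1[OF hp homog_wd[OF hq hu]] br_wd_emb1[OF hq hu] C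
            product.op_cadd_left product.op_cadd_right
            product.op_csign_left product.op_csign_right IH)
          (rule cochain_eqI; cases "even s"; cases "even t"; simp add: cochain_defs algebra_simps)
    qed
  qed
qed

theorem wd_assoc:
  assumes "C c" "C d" "C e"
  shows "wd (wd c d) e = wd c (wd d e)"
  using assms
proof (induction c arbitrary: d e rule: in_C_induct)
  case (homog r c)
  from \<open>C d\<close> \<open>C e\<close> show ?case
  proof (induction d arbitrary: e rule: in_C_induct)
    case (homog s d)
    from \<open>C e\<close> show ?case
      by (induction e rule: in_C_induct)
        (use \<open>H r c\<close> \<open>H s d\<close> wd_assoc_homog homog_imp_C in \<open>simp_all add: product.op_cadd_right\<close>)
  qed (use \<open>H r c\<close> homog_imp_C in \<open>simp_all add: product.op_cadd_left product.op_cadd_right\<close>)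
qed (simp_all add: product.op_cadd_left)

lemma leibniz_emb1_left:
  assumes hq: "H s q" and hu: "H t u"
  shows "derivation_defect br wd 1 s (emb1 x) q u = czero"
proof -
  have "br (emb1 x) (wd q u) = cneg (csign (s + t) (br (wd q u) (emb1 x)))"
    using br_skew[OF homog_emb1 homog_wd[OF hq hu]] by simp
  then show ?thesis
    using br_skew[OF homog_emb1 hq] br_skew[OF homog_emb1 hu] hq hu
    by (simp add: derivation_defect_eq_czero_iff br_wd_emb1[OF hq hu] homog_imp_C
        product.op_cneg_left product.op_cneg_right product.op_csign_left product.op_csign_right
        br_cadd_left bracket.op_csign_left)
      (rule cochain_eqI; cases "even s"; cases "even t"; simp add: cochain_defs algebra_simps)
qed

lemma symbol_eq_scale:
  assumes hd: "H 2 d" and he: "H 2 e" and scale: "\<And>z. cr e 2 [z] = smul b (cr d 2 [z])"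
  shows "symbol e a = b * symbol d a"
proof -
  have "symbol e = (\<lambda>a. b * symbol d a)"
    using symbol_additive[OF hd] symbol_additive[OF he]
    by (intro full_form_additive_eqI[OF full])
      (simp_all add: symbol_g[OF hd] symbol_g[OF he] scale g_scale_left g_scale_right distrib_left)
  then show ?thesis by simp
qed

lemma leibniz_homog2_emb0_emb0:
  assumes hp: "H 2 p"
  shows "derivation_defect br wd 2 0 p (emb0 a) (emb0 b) = czero"
  using derivation_mult[OF is_derivation_symbol[OF hp], of a b]
  by (simp add: derivation_defect_eq_czero_iff wd_emb0_emb0 homog2_br_emb0[OF hp])
    (rule cochain_eqI; simp add: cochain_defs algebra_simps)

lemma leibniz_emb0_emb1_emb1: "derivation_defect br wd 0 1 (emb0 a) (emb1 x) (emb1 y) = czero"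
proof -
  have hxy: "H 2 (wd (emb1 x) (emb1 y))"
    using homog_wd[OF homog_emb1 homog_emb1, of x y] by (simp add: numeral_2_eq_2)
  have insertion: "cr (wd (emb1 x) (emb1 y)) 2 [z] = smul (g y z) x - smul (g x z) y" for z
  proof -
    have "emb1 (cr (wd (emb1 x) (emb1 y)) 2 [z]) = br (wd (emb1 x) (emb1 y)) (emb1 z)"
      using homog2_br_emb1[OF hxy] by simp
    also have "\<dots> = emb1 (smul (g y z) x - smul (g x z) y)"
      using br_wd_emb1[OF homog_emb1 homog_emb1, of x y z]
      by (simp add: br_emb1_emb1 wd_emb0_emb1 wd_emb1_emb0 csign_def)
        (rule cochain_eqI; simp add: cochain_defs)
    finally show ?thesis by (simp add: emb1_def)
  qed
  have "symbol (wd (emb1 x) (emb1 y)) = (\<lambda>_. 0)"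
  proof (rule full_form_additive_eqI[OF full])
    show "symbol (wd (emb1 x) (emb1 y)) (g u w) = 0" for u w
      using g_commute[of u x] g_commute[of u y]
      by (simp add: symbol_g[OF hxy] insertion g_diff_left g_diff_right g_scale_left g_scale_right)
  qed (simp_all add: symbol_additive[OF hxy])
  then show ?thesis
    by (simp add: derivation_defect_eq_czero_iff homog2_emb0_br[OF hxy] br_emb0_emb1)
qed

lemma leibniz_emb0_homog2_emb0:
  assumes hd: "H 2 d"
  shows "derivation_defect br wd 0 2 (emb0 a) d (emb0 b) = czero"
proof -
  have he: "H 2 (wd d (emb0 b))" using homog_wd[OF hd homog_emb0, of b] by simp
  have insertion: "cr (wd d (emb0 b)) 2 [z] = smul b (cr d 2 [z])" for z
  proof -
    have "emb1 (cr (wd d (emb0 b)) 2 [z]) = br (wd d (emb0 b)) (emb1 z)"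
      using homog2_br_emb1[OF he] by simp
    also have "\<dots> = emb1 (smul b (cr d 2 [z]))"
      using br_wd_emb1[OF hd homog_emb0, of b z] hd
      by (simp add: homog2_br_emb1[OF hd] br_emb0_emb1 wd_emb1_emb0 csign_def homog_imp_C)
    finally show ?thesis by (simp add: emb1_def)
  qed
  then have "symbol (wd d (emb0 b)) a = b * symbol d a"
    by (rule symbol_eq_scale[OF hd he])
  then show ?thesis
    using hd by (simp add: derivation_defect_eq_czero_iff homog2_emb0_br[OF he] homog2_emb0_br[OF hd]
        br_emb0_emb0 product.op_cneg_left wd_emb0_emb0 homog_imp_C)
      (rule cochain_eqI; simp add: cochain_defs algebra_simps)
qed

lemma leibniz_emb0_emb0_homog2:
  assumes hd: "H 2 d"
  shows "derivation_defect br wd 0 0 (emb0 a) (emb0 b) d = czero"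
proof -
  have he: "H 2 (wd (emb0 b) d)" using homog_wd[OF homog_emb0 hd, of b] by (simp only: add_0)
  have insertion: "cr (wd (emb0 b) d) 2 [z] = smul b (cr d 2 [z])" for z
  proof -
    have "emb1 (cr (wd (emb0 b) d) 2 [z]) = br (wd (emb0 b) d) (emb1 z)"
      using homog2_br_emb1[OF he] by simp
    also have "\<dots> = emb1 (smul b (cr d 2 [z]))"
      using br_wd_emb1[OF homog_emb0 hd, of b z] hd
      by (simp add: homog2_br_emb1[OF hd] br_emb0_emb1 wd_emb0_emb1 csign_def homog_imp_C)
    finally show ?thesis by (simp add: emb1_def)
  qed
  then have "symbol (wd (emb0 b) d) a = b * symbol d a"
    by (rule symbol_eq_scale[OF hd he])
  then show ?thesis
    using hd by (simp add: derivation_defect_eq_czero_iff homog2_emb0_br[OF he] homog2_emb0_br[OF hd]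
        br_emb0_emb0 product.op_cneg_right wd_emb0_emb0 homog_imp_C)
      (rule cochain_eqI; simp add: cochain_defs algebra_simps)
qed

lemma leibniz_total_degree_2:
  assumes hp: "H r p" and hq: "H s q" and hu: "H t u" and deg: "r + s + t = 2"
  shows "derivation_defect br wd r s p q u = czero"
proof -
  have emb0: "\<exists>a. c = emb0 a" if "H 0 c" for c using homog_0_eq_emb0[OF that] by blast
  have emb1: "\<exists>x. c = emb1 x" if "H 1 c" for c using homog_1_eq_emb1[OF that] by blast
  consider "r = 1" | "r = 2" "s = 0" "t = 0" | "r = 0" "s = 1" "t = 1" | "r = 0" "s = 2" "t = 0"
    | "r = 0" "s = 0" "t = 2"
    using deg by atomize_elim presburger
  then show ?thesis
  proof cases
    case 1
    with emb1 hp obtain x where "p = emb1 x" by blast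
    then show ?thesis using leibniz_emb1_left[OF hq hu] 1 by simp
  next
    case 2
    with emb0 hq hu obtain a b where "q = emb0 a" "u = emb0 b" by blast
    then show ?thesis using leibniz_homog2_emb0_emb0 hp 2 by simp
  next
    case 3
    with emb0 emb1 hp hq hu obtain a x y where "p = emb0 a" "q = emb1 x" "u = emb1 y" by blast
    then show ?thesis using leibniz_emb0_emb1_emb1 3 by simp
  next
    case 4
    with emb0 hp hu obtain a b where "p = emb0 a" "u = emb0 b" by blast
    then show ?thesis using leibniz_emb0_homog2_emb0 hq 4 by simp
  next
    case 5
    with emb0 hp hq obtain a b where "p = emb0 a" "q = emb0 b" by blast
    then show ?thesis using leibniz_emb0_emb0_homog2 hu 5 by simp
  qed
qed

theorem leibniz:
  assumes "H r p" "H s q" "H t u"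
  shows "br p (wd q u) = cadd (wd (br p q) u) (csign (r * s) (wd q (br p u)))"
proof -
  have "derivation_defect br wd r s p q u = czero"
    using assms
  proof (induction "r + s + t" arbitrary: r s t p q u rule: less_induct)
    case less
    consider "r + s + t < 2" | "r + s + t = 2" | "3 \<le> r + s + t" by arith
    then show ?case
    proof cases
      case 1
      then show ?thesis by (intro product.derivation_defect_eq_czero_if_deg_less[OF less.prems]) simp
    next
      case 2
      then show ?thesis by (rule leibniz_total_degree_2[OF less.prems])
    next
      case 3
      then show ?thesis
        by (intro product.derivation_defect_eq_czero_by_insertion[OF less.prems]) (simp_all add: less.hyps)
    qed
  qed
  then show ?thesis by (simp add: derivation_defect_eq_czero_iff)
qed

end

theorem mainTheorem1:
  fixes \<iota> :: "'r::comm_ring_1 \<Rightarrow> 'a::comm_ring_1"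
    and smul :: "'a \<Rightarrow> 'e::ab_group_add \<Rightarrow> 'e"
    and g :: "'e \<Rightarrow> 'e \<Rightarrow> 'a"
    and br wd :: "('a, 'e) cochain \<Rightarrow> ('a, 'e) cochain \<Rightarrow> ('a, 'e) cochain"
  assumes "contains_rat TYPE('r)"
    and "algebra_map \<iota>"
    and "module smul"
    and "fg_projective smul"
    and "symmetric_bilinear smul g"
    and "strongly_nondegenerate smul g"
    and "full_form g"
    and "is_bracket \<iota> smul g br"
    and "is_wedge \<iota> smul g br wd"
  shows
    "(\<forall>c d e. in_C \<iota> smul g c \<longrightarrow> in_C \<iota> smul g d \<longrightarrow> in_C \<iota> smul g e \<longrightarrow>
        wd (wd c d) e = wd c (wd d e)) \<and>
     (\<forall>r s c d. homog \<iota> smul g r c \<longrightarrow> homog \<iota> smul g s d \<longrightarrow>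
        homog \<iota> smul g (r + s) (wd c d) \<and> wd c d = csign (r * s) (wd d c)) \<and>
     (\<forall>r s c d. homog \<iota> smul g r c \<longrightarrow> homog \<iota> smul g s d \<longrightarrow>
        homog_int \<iota> smul g (int r + int s - 2) (br c d) \<and> br c d = cneg (csign (r * s) (br d c))) \<and>
     (\<forall>r s t c1 c2 c3. homog \<iota> smul g r c1 \<longrightarrow> homog \<iota> smul g s c2 \<longrightarrow> homog \<iota> smul g t c3 \<longrightarrow>
        br c1 (br c2 c3) = cadd (br (br c1 c2) c3) (csign (r * s) (br c2 (br c1 c3)))) \<and>
     (\<forall>r s t c1 c2 c3. homog \<iota> smul g r c1 \<longrightarrow> homog \<iota> smul g s c2 \<longrightarrow> homog \<iota> smul g t c3 \<longrightarrow>
        br c1 (wd c2 c3) = cadd (wd (br c1 c2) c3) (csign (r * s) (wd c2 (br c1 c3))))"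
proof -
  have "inj g"
    using \<open>strongly_nondegenerate smul g\<close> by (simp add: strongly_nondegenerate_def bij_betw_def)
  then interpret cochain_poisson \<iota> smul g br wd
    using assms by (simp add: cochain_poisson_def cochain_poisson_axioms_def cochain_bracket_def
        cochain_bracket_axioms_def symmetric_form_module_def)
  show ?thesis
    by (intro conjI allI impI;
        (rule wd_assoc homog_wd wd_commute homog_int_br br_skew jacobi leibniz; assumption))
qed

end
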